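(* Let $K\ge 3$ and $m\in\mathbb{N}$, and let $N^{\star}$ be the fine-tuning capacity (for $K$ samples) of 3-layer fully-connected ReLU networks with $m$ hidden neurons. 1. If $K\le\left\lfloor\frac{m^2}{16}\right\rfloor$, then $N^{\star}=K$. 2. If $\left\lfloor\frac{m^2}{16}\right\rfloor+1\le K<\frac{m^2+m+4}{2}$, then $\left\lfloor\frac{m^2}{108}-\frac23\right\rfloor\le N^{\star}\le K$. 3. If $K\ge\frac{m^2+m+4}{2}$, then $\left\lfloor\frac{m^2}{108}-\frac23\right\rfloor\le N^{\star}\le\frac{m^2+m}{6}$.
   Context: $[K]=\{1,\dots,K\}$. A 3-layer fully-connected ReLU network with $m$ hidden neurons is $g({\bm{x}}) = {\bm{W}}_3\sigma({\bm{W}}_2\sigma({\bm{W}}_1{\bm{x}}+{\bm{b}}_1)+{\bm{b}}_2)+b_3$ with hidden widths $d_1,d_2$, $m=d_1+d_2$, and $\sigma(t)=\max\{t,0\}$ coordinatewise. Target values are assumed to lie in $[-1,1]$. The fine-tuning capacity $N^{\star}$ of this class is the largest $N\in\{0,\dots,K\}$ such that for every $T\subseteq[K]$ with $|T|=N$, every pairwise distinct ${\bm{x}}_1,\dots,{\bm{x}}_K\in\mathbb{R}^d$ and every $z_1,\dots,z_K\in[-1,1]$, there exist parameters with $g({\bm{x}}_i)=z_i$ for $i\in T$ and $g({\bm{x}}_i)=0$ for $i\in[K]\setminus T$. *)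

theory Defs
  imports "HOL-Analysis.Analysis"
begin

definition relu :: "real \<Rightarrow> real" where
  "relu t = max t 0"

definition net3 ::
  "nat \<Rightarrow> nat \<Rightarrow> (nat \<Rightarrow> real^'n) \<Rightarrow> (nat \<Rightarrow> real) \<Rightarrow> (nat \<Rightarrow> nat \<Rightarrow> real)
   \<Rightarrow> (nat \<Rightarrow> real) \<Rightarrow> (nat \<Rightarrow> real) \<Rightarrow> real \<Rightarrow> real^'n \<Rightarrow> real" where
  "net3 d1 d2 W1 b1 W2 b2 W3 b3 x =
     (\<Sum>k<d2. W3 k * relu ((\<Sum>j<d1. W2 k j * relu (W1 j \<bullet> x + b1 j)) + b2 k)) + b3"

definition ft_feasible :: "nat \<Rightarrow> nat \<Rightarrow> nat \<Rightarrow> ('n::finite) itself \<Rightarrow> bool" where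
  "ft_feasible m K N _ \<longleftrightarrow>
     (\<forall>T. T \<subseteq> {1..K} \<longrightarrow> card T = N \<longrightarrow>
      (\<forall>(x :: nat \<Rightarrow> real^'n) (z :: nat \<Rightarrow> real).
         inj_on x {1..K} \<longrightarrow> (\<forall>i\<in>{1..K}. \<bar>z i\<bar> \<le> 1) \<longrightarrow>
         (\<exists>d1 d2 W1 b1 W2 b2 W3 b3. d1 + d2 = m \<and>
            (\<forall>i\<in>T. net3 d1 d2 W1 b1 W2 b2 W3 b3 (x i) = z i) \<and>
            (\<forall>i\<in>{1..K} - T. net3 d1 d2 W1 b1 W2 b2 W3 b3 (x i) = 0))))"

definition ft_capacity :: "nat \<Rightarrow> nat \<Rightarrow> ('n::finite) itself \<Rightarrow> nat" where
  "ft_capacity m K t = (GREATEST N. N \<le> K \<and> ft_feasible m K N t)"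

end

theory Submission
  imports Defs
begin

text \<open>
  Along the line \<open>t \<mapsto> t (1,\<dots>,1)\<close> a network with hidden widths \<open>d1, d2\<close> is a
  piecewise affine function of \<open>t\<close> with at most \<open>d1 + d2 (d1 + 1)\<close> breakpoints: the first layer
  contributes \<open>d1\<close> kinks, and each second-layer neuron at most one more on each of the \<open>d1 + 1\<close>
  pieces of the first layer. Samples \<open>i (1,\<dots>,1)\<close> with targets \<open>(-1)^i\<close> on a set containing every
  third of the first \<open>min K (3N + 2)\<close> samples force the function to change direction in every gap,
  hence a breakpoint in every gap; as \<open>d1 d2 \<le> m^2/4\<close>, this is impossible when \<open>N > (m^2 + m)/6\<close>.

  Project the samples injectively to a line and sort them. \<open>2L - 1\<close> first-layer
  neurons produce, for arbitrary coefficients, functions that are affine on each of \<open>L\<close> blocks of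
  consecutive samples; a pair of second-layer neurons then adds one step in every block simultaneously.
  Hence \<open>2P\<close> second-layer neurons fit every target vector whose increments have at most \<open>P\<close> nonzero
  entries in each block. Blocks of \<open>K/L\<close> samples give memorisation for \<open>K \<le> m^2/16\<close>; blocks
  containing \<open>m/8\<close> of the \<open>N\<close> nonzero targets give fine-tuning for \<open>N \<le> m^2/108 - 2/3\<close>.
\<close>

section \<open>Piecewise affine functions of one variable\<close>

definition affine_on :: "(real \<Rightarrow> real) \<Rightarrow> real \<Rightarrow> real \<Rightarrow> bool" where
  "affine_on G u v \<longleftrightarrow> (\<exists>a b. \<forall>t\<in>{u..v}. G t = a + b * t)"

definition piecewise_affine :: "(real \<Rightarrow> real) \<Rightarrow> real set \<Rightarrow> bool" where
  "piecewise_affine G B \<longleftrightarrow> finite B \<and> (\<forall>u v. u < v \<longrightarrow> B \<inter> {u<..<v} = {} \<longrightarrow> affine_on G u v)"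

lemma affine_on_cong:
  assumes "\<And>t. t \<in> {u..v} \<Longrightarrow> f t = g t" "affine_on f u v"
  shows "affine_on g u v"
proof -
  from assms(2) obtain a b where "\<forall>t\<in>{u..v}. f t = a + b * t" unfolding affine_on_def by blast
  with assms(1) show ?thesis unfolding affine_on_def by (intro exI[of _ a] exI[of _ b]) simp
qed

lemma affine_on_slope:
  assumes "affine_on G u v"
  obtains b where "\<And>s t. s \<in> {u..v} \<Longrightarrow> t \<in> {u..v} \<Longrightarrow> G t - G s = b * (t - s)"
proof -
  from assms obtain a b where "\<forall>t\<in>{u..v}. G t = a + b * t"
    unfolding affine_on_def by blast
  then show thesis by (intro that[of b]) (simp add: algebra_simps)
qed

lemma affine_on_linear: "affine_on (\<lambda>t. a + b * t) u v"
  unfolding affine_on_def by (rule exI[of _ a], rule exI[of _ b]) simp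

lemma affine_on_const: "affine_on (\<lambda>t. c) u v"
  using affine_on_linear[of c 0] by simp

lemma affine_on_relu:
  assumes h: "\<And>t. t \<in> {u..v} \<Longrightarrow> h t = a + b * t"
    and no_cross: "b = 0 \<or> (\<forall>t\<in>{u<..<v}. a + b * t \<noteq> 0)"
  shows "affine_on (\<lambda>t. relu (h t)) u v"
proof -
  have "(\<forall>t\<in>{u..v}. 0 \<le> h t) \<or> (\<forall>t\<in>{u..v}. h t \<le> 0)"
  proof (rule ccontr)
    assume "\<not> ?thesis"
    then obtain t1 t2 where "t1 \<in> {u..v}" "t2 \<in> {u..v}" "h t1 < 0" "0 < h t2"
      by (auto simp: not_le)
    then have t: "t1 \<in> {u..v}" "t2 \<in> {u..v}" "a + b * t1 < 0" "0 < a + b * t2"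
      using h by simp_all
    then have "b \<noteq> 0" by auto
    define t0 where "t0 = - a / b"
    have "a + b * t0 = 0" using \<open>b \<noteq> 0\<close> by (simp add: t0_def)
    moreover have "b * (t0 - t1) > 0" "b * (t2 - t0) > 0"
      using t \<open>a + b * t0 = 0\<close> by (simp_all add: algebra_simps)
    then have "t0 \<in> {u<..<v}"
      using t(1,2) by (cases "b > 0") (auto simp: zero_less_mult_iff)
    ultimately show False using no_cross \<open>b \<noteq> 0\<close> by blast
  qed
  then show ?thesis
  proof
    assume "\<forall>t\<in>{u..v}. 0 \<le> h t"
    then have "a + b * t = relu (h t)" if "t \<in> {u..v}" for t
      using that by (simp add: relu_def h)
    then show ?thesis by (rule affine_on_cong[OF _ affine_on_linear])
  next
    assume "\<forall>t\<in>{u..v}. h t \<le> 0"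
    then have "0 = relu (h t)" if "t \<in> {u..v}" for t
      using that by (simp add: relu_def)
    then show ?thesis by (rule affine_on_cong[OF _ affine_on_const])
  qed
qed

lemma piecewise_affine_subset:
  "piecewise_affine G B \<Longrightarrow> B \<subseteq> B' \<Longrightarrow> finite B' \<Longrightarrow> piecewise_affine G B'"
  unfolding piecewise_affine_def by blast

lemma piecewise_affine_const: "finite B \<Longrightarrow> piecewise_affine (\<lambda>t. c) B"
  unfolding piecewise_affine_def by (simp add: affine_on_const)

lemma piecewise_affine_add:
  assumes "piecewise_affine f B" "piecewise_affine g B"
  shows "piecewise_affine (\<lambda>t. f t + g t) B"
  unfolding piecewise_affine_def
proof (intro conjI allI impI)
  fix u v :: real assume "u < v" "B \<inter> {u<..<v} = {}"
  with assms obtain a1 b1 a2 b2 where "\<forall>t\<in>{u..v}. f t = a1 + b1 * t" "\<forall>t\<in>{u..v}. g t = a2 + b2 * t"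
    unfolding piecewise_affine_def affine_on_def by meson
  then show "affine_on (\<lambda>t. f t + g t) u v"
    unfolding affine_on_def by (intro exI[of _ "a1 + a2"] exI[of _ "b1 + b2"]) (simp add: algebra_simps)
qed (use assms in \<open>simp add: piecewise_affine_def\<close>)

lemma piecewise_affine_cmult:
  assumes "piecewise_affine f B"
  shows "piecewise_affine (\<lambda>t. c * f t) B"
  unfolding piecewise_affine_def
proof (intro conjI allI impI)
  fix u v :: real assume "u < v" "B \<inter> {u<..<v} = {}"
  with assms obtain a b where "\<forall>t\<in>{u..v}. f t = a + b * t"
    unfolding piecewise_affine_def affine_on_def by meson
  then show "affine_on (\<lambda>t. c * f t) u v"
    unfolding affine_on_def by (intro exI[of _ "c * a"] exI[of _ "c * b"]) (simp add: algebra_simps)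
qed (use assms in \<open>simp add: piecewise_affine_def\<close>)

lemma piecewise_affine_sum:
  assumes "finite S" "\<And>k. k \<in> S \<Longrightarrow> piecewise_affine (f k) B" "finite B"
  shows "piecewise_affine (\<lambda>t. \<Sum>k\<in>S. f k t) B"
  using assms
proof (induction S rule: finite_induct)
  case empty
  then show ?case by (simp add: piecewise_affine_const)
next
  case (insert k S)
  then show ?case by (simp add: piecewise_affine_add)
qed

lemma piecewise_affine_relu_linear: "piecewise_affine (\<lambda>t. relu (a * t + e)) {- e / a}"
  unfolding piecewise_affine_def
proof (intro conjI allI impI)
  fix u v :: real assume "u < v" "{- e / a} \<inter> {u<..<v} = {}"
  have no_cross: "a = 0 \<or> (\<forall>t\<in>{u<..<v}. e + a * t \<noteq> 0)"
  proof (cases "a = 0")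
    case False
    have "t \<notin> {u<..<v}" if "e + a * t = 0" for t
    proof -
      have "a * t = - e" using that by linarith
      then have "t = - e / a" using False by (simp add: field_simps)
      then show ?thesis using \<open>{- e / a} \<inter> {u<..<v} = {}\<close> by blast
    qed
    then show ?thesis by blast
  qed simp
  show "affine_on (\<lambda>t. relu (a * t + e)) u v"
  proof (rule affine_on_relu[of u v _ e a])
    show "a * t + e = e + a * t" for t by simp
  qed (fact no_cross)
qed simp

lemma same_piece_no_break:
  fixes Z :: "real set"
  assumes "finite Z" "s < t" "card {z\<in>Z. z < s} = card {z\<in>Z. z < t}"
  shows "Z \<inter> {s<..<t} = {}"
proof (rule ccontr)
  assume "Z \<inter> {s<..<t} \<noteq> {}"
  then obtain z where z: "z \<in> Z" "s < z" "z < t" by auto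
  have "{z\<in>Z. z < s} \<subseteq> {z\<in>Z. z < t}" using \<open>s < t\<close> by auto
  moreover have "z \<in> {z\<in>Z. z < t}" "z \<notin> {z\<in>Z. z < s}" using z by auto
  ultimately have "{z\<in>Z. z < s} \<subset> {z\<in>Z. z < t}" by blast
  then have "card {z\<in>Z. z < s} < card {z\<in>Z. z < t}" using assms(1) by (intro psubset_card_mono) auto
  then show False using assms(3) by simp
qed

text \<open>Between two consecutive breakpoints of \<open>h\<close> the function \<open>relu \<circ> h\<close> acquires at most one
  new breakpoint, the zero of \<open>h\<close> on that piece; the pieces are indexed by the number of breakpoints
  to their left.\<close>
lemma piecewise_affine_relu:
  assumes h: "piecewise_affine h Z"
  obtains C where "card C \<le> card Z + 1" "piecewise_affine (\<lambda>t. relu (h t)) (Z \<union> C)"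
proof -
  have finZ: "finite Z" using h unfolding piecewise_affine_def by simp
  define piece where "piece t = card {z\<in>Z. z < t}" for t
  define C where "C = {t. t \<notin> Z \<and> h t = 0 \<and> (\<exists>s. s \<notin> Z \<and> piece s = piece t \<and> h s \<noteq> 0)}"
  have "inj_on piece C"
  proof (rule inj_onI, rule ccontr)
    fix t1 t2 assume t1: "t1 \<in> C" and t2: "t2 \<in> C" and eq: "piece t1 = piece t2" and ne: "t1 \<noteq> t2"
    from t1 obtain s where s: "piece s = piece t1" "h s \<noteq> 0" and "h t1 = 0"
      unfolding C_def by auto
    have "h t2 = 0" using t2 unfolding C_def by auto
    define lo where "lo = min t1 (min t2 s)"
    define hi where "hi = max t1 (max t2 s)"
    have "lo < hi" unfolding lo_def hi_def using ne by (auto simp: min_def max_def)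
    moreover have "piece lo = piece hi"
      unfolding lo_def hi_def using eq s(1) by (auto simp: min_def max_def)
    ultimately have "Z \<inter> {lo<..<hi} = {}"
      using same_piece_no_break[OF finZ] unfolding piece_def by blast
    with h \<open>lo < hi\<close> obtain b where b: "\<And>x y. x \<in> {lo..hi} \<Longrightarrow> y \<in> {lo..hi} \<Longrightarrow> h y - h x = b * (y - x)"
      unfolding piecewise_affine_def by (meson affine_on_slope)
    have mem: "t1 \<in> {lo..hi}" "t2 \<in> {lo..hi}" "s \<in> {lo..hi}" unfolding lo_def hi_def by auto
    have "b * (t2 - t1) = 0" using b[OF mem(1,2)] \<open>h t1 = 0\<close> \<open>h t2 = 0\<close> by simp
    then have "b = 0" using ne by simp
    then show False using b[OF mem(1,3)] \<open>h t1 = 0\<close> s(2) by simp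
  qed
  moreover have "piece ` C \<subseteq> {..card Z}"
    unfolding piece_def using finZ by (auto intro: card_mono)
  ultimately have "card C \<le> card Z + 1" and finC: "finite C"
    using card_inj_on_le[of piece C "{..card Z}"] inj_on_finite[of piece C "{..card Z}"] by auto
  have "affine_on (\<lambda>t. relu (h t)) u v" if uv: "u < v" "(Z \<union> C) \<inter> {u<..<v} = {}" for u v
  proof -
    have Z0: "Z \<inter> {u<..<v} = {}" using uv by auto
    with h uv obtain a b where ab: "\<forall>t\<in>{u..v}. h t = a + b * t"
      unfolding piecewise_affine_def affine_on_def by meson
    have "\<forall>t\<in>{u<..<v}. a + b * t \<noteq> 0" if "b \<noteq> 0"
    proof (intro ballI notI)
      fix t0 assume t0: "t0 \<in> {u<..<v}" "a + b * t0 = 0"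
      define s where "s = (t0 + v) / 2"
      have s: "s \<in> {u<..<v}" "t0 < s" using t0 unfolding s_def by auto
      have "h s = (a + b * t0) + b * (s - t0)" using ab s by (simp add: algebra_simps)
      then have "h s \<noteq> 0" using s \<open>b \<noteq> 0\<close> t0(2) by simp
      moreover have "h t0 = 0" using ab t0 by auto
      moreover have "{z\<in>Z. z < s} = {z\<in>Z. z < t0}" using Z0 s t0 by auto
      then have "piece s = piece t0" unfolding piece_def by simp
      ultimately have "t0 \<in> C" using Z0 t0 s unfolding C_def by blast
      then show False using uv(2) t0 by blast
    qed
    then show ?thesis using ab by (intro affine_on_relu[of u v h a b]) auto
  qed
  then have "piecewise_affine (\<lambda>t. relu (h t)) (Z \<union> C)"
    unfolding piecewise_affine_def using finZ finC by blast
  with \<open>card C \<le> card Z + 1\<close> show thesis by (rule that)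
qed

section \<open>Networks along a line\<close>

definition net3_1d ::
  "nat \<Rightarrow> nat \<Rightarrow> (nat \<Rightarrow> real) \<Rightarrow> (nat \<Rightarrow> real) \<Rightarrow> (nat \<Rightarrow> nat \<Rightarrow> real)
   \<Rightarrow> (nat \<Rightarrow> real) \<Rightarrow> (nat \<Rightarrow> real) \<Rightarrow> real \<Rightarrow> real \<Rightarrow> real" where
  "net3_1d d1 d2 a b1 W2 b2 W3 b3 t =
     (\<Sum>k<d2. W3 k * relu ((\<Sum>j<d1. W2 k j * relu (a j * t + b1 j)) + b2 k)) + b3"

lemma net3_rank_one_rows:
  "net3 d1 d2 (\<lambda>j. a j *\<^sub>R w) b1 W2 b2 W3 b3 x = net3_1d d1 d2 a b1 W2 b2 W3 b3 (w \<bullet> x)"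
  unfolding net3_def net3_1d_def by (simp add: inner_scaleR_left)

lemma net3_on_line:
  "net3 d1 d2 W1 b1 W2 b2 W3 b3 (t *\<^sub>R v) = net3_1d d1 d2 (\<lambda>j. W1 j \<bullet> v) b1 W2 b2 W3 b3 t"
  unfolding net3_def net3_1d_def by (simp add: inner_scaleR_right mult.commute)

lemma net3_1d_piecewise_affine:
  obtains B where "card B \<le> d1 + d2 * (d1 + 1)" "piecewise_affine (net3_1d d1 d2 a b1 W2 b2 W3 b3) B"
proof -
  define Z where "Z = (\<lambda>j. - b1 j / a j) ` {..<d1}"
  have finZ: "finite Z" and cardZ: "card Z \<le> d1"
    unfolding Z_def using card_image_le[of "{..<d1}"] by auto
  define h where "h k t = (\<Sum>j<d1. W2 k j * relu (a j * t + b1 j)) + b2 k" for k t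
  have hZ: "piecewise_affine (h k) Z" for k
  proof -
    have "piecewise_affine (\<lambda>t. relu (a j * t + b1 j)) Z" if "j < d1" for j
      using that finZ by (intro piecewise_affine_subset[OF piecewise_affine_relu_linear]) (auto simp: Z_def)
    then show ?thesis
      unfolding h_def using finZ
      by (intro piecewise_affine_add piecewise_affine_sum piecewise_affine_cmult piecewise_affine_const) auto
  qed
  have "\<forall>k. \<exists>C. card C \<le> card Z + 1 \<and> piecewise_affine (\<lambda>t. relu (h k t)) (Z \<union> C)"
  proof
    fix k
    obtain C where "card C \<le> card Z + 1" "piecewise_affine (\<lambda>t. relu (h k t)) (Z \<union> C)"
      using piecewise_affine_relu[OF hZ] .
    then show "\<exists>C. card C \<le> card Z + 1 \<and> piecewise_affine (\<lambda>t. relu (h k t)) (Z \<union> C)" by blast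
  qed
  then obtain C where C: "\<And>k. card (C k) \<le> card Z + 1"
    "\<And>k. piecewise_affine (\<lambda>t. relu (h k t)) (Z \<union> C k)"
    using choice[of "\<lambda>k C. card C \<le> card Z + 1 \<and> piecewise_affine (\<lambda>t. relu (h k t)) (Z \<union> C)"]
    by blast
  have finC: "finite (C k)" for k using C(2)[of k] unfolding piecewise_affine_def by simp
  define B where "B = Z \<union> (\<Union>k<d2. C k)"
  have finB: "finite B" unfolding B_def using finZ finC by simp
  have "card B \<le> card Z + card (\<Union>k<d2. C k)" unfolding B_def by (rule card_Un_le)
  also have "\<dots> \<le> card Z + (\<Sum>k<d2. card (C k))" using card_UN_le[of "{..<d2}" C] by simp
  also have "\<dots> \<le> d1 + d2 * (d1 + 1)"
  proof -
    have "card (C k) \<le> d1 + 1" for k using C(1)[of k] cardZ by linarith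
    then have "(\<Sum>k<d2. card (C k)) \<le> d2 * (d1 + 1)"
      using sum_bounded_above[of "{..<d2}" "\<lambda>k. card (C k)" "d1 + 1"] by simp
    with cardZ show ?thesis by linarith
  qed
  finally have card: "card B \<le> d1 + d2 * (d1 + 1)" .
  have "piecewise_affine (\<lambda>t. relu (h k t)) B" if "k < d2" for k
    by (rule piecewise_affine_subset[OF C(2)[of k] _ finB]) (use that in \<open>auto simp: B_def\<close>)
  then have "piecewise_affine (\<lambda>t. (\<Sum>k<d2. W3 k * relu (h k t)) + b3) B"
    using finB by (intro piecewise_affine_add piecewise_affine_sum piecewise_affine_cmult piecewise_affine_const) auto
  moreover have "net3_1d d1 d2 a b1 W2 b2 W3 b3 = (\<lambda>t. (\<Sum>k<d2. W3 k * relu (h k t)) + b3)"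
    by (simp add: fun_eq_iff net3_1d_def h_def)
  ultimately have "piecewise_affine (net3_1d d1 d2 a b1 W2 b2 W3 b3) B"
    by simp
  with card show thesis by (rule that)
qed

lemma net3_1d_constant_if_degenerate:
  "d1 = 0 \<or> d2 = 0 \<Longrightarrow> net3_1d d1 d2 a b1 W2 b2 W3 b3 s = net3_1d d1 d2 a b1 W2 b2 W3 b3 t"
  unfolding net3_1d_def by auto

lemma mono_or_antimono_comp:
  fixes f g :: "real \<Rightarrow> real"
  assumes "mono f \<or> antimono f" "mono g \<or> antimono g"
  shows "mono (f \<circ> g) \<or> antimono (f \<circ> g)"
  using assms
proof (elim disjE)
  assume "mono f" "mono g"
  then have "mono (f \<circ> g)" by (intro monoI) (simp add: monoD)
  then show ?thesis ..
next
  assume "mono f" "antimono g"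
  then have "antimono (f \<circ> g)" by (intro antimonoI) (simp add: monoD antimonoD)
  then show ?thesis ..
next
  assume "antimono f" "mono g"
  then have "antimono (f \<circ> g)" by (intro antimonoI) (simp add: monoD antimonoD)
  then show ?thesis ..
next
  assume "antimono f" "antimono g"
  then have "mono (f \<circ> g)" by (intro monoI) (simp add: antimonoD)
  then show ?thesis ..
qed

lemma mono_or_antimono_affine: "mono (\<lambda>t::real. c * t + d) \<or> antimono (\<lambda>t. c * t + d)"
proof (cases "c \<ge> 0")
  case True
  then have "mono (\<lambda>t::real. c * t + d)" by (intro monoI) (simp add: mult_left_mono)
  then show ?thesis ..
next
  case False
  then have "antimono (\<lambda>t::real. c * t + d)" by (intro antimonoI) (simp add: mult_left_mono_neg)
  then show ?thesis ..
qed

lemma net3_1d_single_neurons_monotone: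
  "mono (net3_1d 1 1 a b1 W2 b2 W3 b3) \<or> antimono (net3_1d 1 1 a b1 W2 b2 W3 b3)"
proof -
  have relu: "mono relu \<or> antimono relu" by (auto intro: monoI simp: relu_def)
  have "net3_1d 1 1 a b1 W2 b2 W3 b3 =
      (\<lambda>t. W3 0 * t + b3) \<circ> relu \<circ> (\<lambda>t. W2 0 0 * t + b2 0) \<circ> relu \<circ> (\<lambda>t. a 0 * t + b1 0)"
    by (simp add: net3_1d_def fun_eq_iff)
  then show ?thesis
    by (simp only:) (intro mono_or_antimono_comp mono_or_antimono_affine relu)
qed

section \<open>The upper bound\<close>

lemma exists_break_free_subinterval:
  fixes G :: "real \<Rightarrow> real"
  assumes "finite B" "a < b" "R (G b - G a)" "\<And>x y. R (x + y) \<Longrightarrow> R x \<or> R y"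
  shows "\<exists>u v. a \<le> u \<and> u < v \<and> v \<le> b \<and> B \<inter> {u<..<v} = {} \<and> R (G v - G u)"
  using assms(2,3)
proof (induction "card (B \<inter> {a<..<b})" arbitrary: a b rule: less_induct)
  case less
  show ?case
  proof (cases "B \<inter> {a<..<b} = {}")
    case True
    then show ?thesis using less.prems by blast
  next
    case False
    then obtain c where c: "c \<in> B" "a < c" "c < b" by auto
    have fin: "finite (B \<inter> {a<..<b})" using assms(1) by simp
    have "R (G c - G a) \<or> R (G b - G c)"
      using assms(4)[of "G c - G a" "G b - G c"] less.prems by simp
    then show ?thesis
    proof
      assume "R (G c - G a)"
      moreover have "card (B \<inter> {a<..<c}) < card (B \<inter> {a<..<b})"
        using c fin by (intro psubset_card_mono) auto
      ultimately obtain u v where "a \<le> u" "u < v" "v \<le> c" "B \<inter> {u<..<v} = {}" "R (G v - G u)"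
        using less.hyps c(2) by blast
      then show ?thesis using c by (intro exI[of _ u] exI[of _ v]) auto
    next
      assume "R (G b - G c)"
      moreover have "card (B \<inter> {c<..<b}) < card (B \<inter> {a<..<b})"
        using c fin by (intro psubset_card_mono) auto
      ultimately obtain u v where "c \<le> u" "u < v" "v \<le> b" "B \<inter> {u<..<v} = {}" "R (G v - G u)"
        using less.hyps c(3) by blast
      then show ?thesis using c by (intro exI[of _ u] exI[of _ v]) auto
    qed
  qed
qed

lemma affine_on_no_turn:
  fixes \<sigma> :: real
  assumes "affine_on G u w" "u < v" "v \<le> v'" "v' < w" "\<sigma> \<noteq> 0"
    and "0 \<le> \<sigma> * (G v - G u)" "0 \<le> - \<sigma> * (G w - G v')"
  shows "G v = G u" "G w = G v'"
proof -
  obtain b where b: "\<And>s t. s \<in> {u..w} \<Longrightarrow> t \<in> {u..w} \<Longrightarrow> G t - G s = b * (t - s)"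
    using assms(1) by (meson affine_on_slope)
  have e: "G v - G u = b * (v - u)" "G w - G v' = b * (w - v')"
    using b[of u v] b[of v' w] assms(2-4) by simp_all
  have "0 \<le> (\<sigma> * b) * (v - u)" "0 \<le> - ((\<sigma> * b) * (w - v'))"
    using assms(6,7) unfolding e by (simp_all add: mult.assoc)
  then have "0 \<le> \<sigma> * b" "\<sigma> * b \<le> 0"
    using assms(2,4) by (simp_all add: zero_le_mult_iff mult_le_0_iff)
  then have "b = 0" using assms(5) by simp
  then show "G v = G u" "G w = G v'" using e by simp_all
qed

text \<open>In each gap \<open>[p i, p (i+1)]\<close> choose a break-free piece on which \<open>G\<close> rises (even \<open>i\<close>) or falls
  (odd \<open>i\<close>), strictly when \<open>G\<close> is not constant across the gap. Two consecutive such pieces cannot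
  lie on one affine piece of \<open>G\<close>, so a breakpoint separates them.\<close>
lemma alternating_increments_force_breaks:
  fixes G :: "real \<Rightarrow> real" and p :: "nat \<Rightarrow> real"
  assumes G: "piecewise_affine G B"
    and p: "\<And>i. i < r \<Longrightarrow> p i < p (Suc i)"
    and sign: "\<And>i. i < r \<Longrightarrow> 0 \<le> (-1)^i * (G (p (Suc i)) - G (p i))"
    and turn: "\<And>i. Suc i < r \<Longrightarrow> G (p i) \<noteq> G (p (Suc i)) \<or> G (p (Suc i)) \<noteq> G (p (Suc (Suc i)))"
  shows "r - 1 \<le> card B"
proof -
  have finB: "finite B" using G by (simp add: piecewise_affine_def)
  define R where "R i x \<longleftrightarrow>
      (if G (p i) \<noteq> G (p (Suc i)) then 0 < (-1::real)^i * x else 0 \<le> (-1::real)^i * x)" for i x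
  have R_split: "R i (x + y) \<Longrightarrow> R i x \<or> R i y" for i x y
    unfolding R_def by (auto simp: distrib_left split: if_splits)
  define Q where "Q i u v \<longleftrightarrow>
      p i \<le> u \<and> u < v \<and> v \<le> p (Suc i) \<and> B \<inter> {u<..<v} = {} \<and> R i (G v - G u)" for i u v
  have "\<exists>u v. Q i u v" if "i < r" for i
    unfolding Q_def
  proof (rule exists_break_free_subinterval[OF finB p[OF that] _ R_split])
    show "R i (G (p (Suc i)) - G (p i))"
    proof (cases "G (p i) = G (p (Suc i))")
      case False
      then have "(-1::real)^i * (G (p (Suc i)) - G (p i)) \<noteq> 0" by simp
      then have "0 < (-1::real)^i * (G (p (Suc i)) - G (p i))"
        using sign[OF that] by (metis order_le_less)
      with False show ?thesis by (simp add: R_def)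
    qed (use sign[OF that] in \<open>simp add: R_def\<close>)
  qed
  then have "\<forall>i. \<exists>u v. i < r \<longrightarrow> Q i u v" by blast
  from choice[OF this] obtain u where "\<forall>i. \<exists>v. i < r \<longrightarrow> Q i (u i) v" by blast
  from choice[OF this] obtain v where "\<forall>i. i < r \<longrightarrow> Q i (u i) (v i)" by blast
  then have uv: "\<And>i. i < r \<Longrightarrow>
      p i \<le> u i \<and> u i < v i \<and> v i \<le> p (Suc i) \<and> B \<inter> {u i<..<v i} = {} \<and> R i (G (v i) - G (u i))"
    unfolding Q_def by blast
  have "\<exists>c\<in>B. v i \<le> c \<and> c \<le> u (Suc i)" if i: "Suc i < r" for i
  proof (rule ccontr)
    assume no_break: "\<not> ?thesis"
    note uv1 = uv[of i] and uv2 = uv[of "Suc i"]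
    have "c \<notin> B" if c: "u i < c" "c < v (Suc i)" for c
    proof
      assume "c \<in> B"
      then have "c \<notin> {u i<..<v i}" "c \<notin> {u (Suc i)<..<v (Suc i)}"
        using uv1 uv2 i by auto
      then have "v i \<le> c" "c \<le> u (Suc i)" using c by auto
      with \<open>c \<in> B\<close> no_break show False by blast
    qed
    then have "B \<inter> {u i<..<v (Suc i)} = {}" by auto
    have "u i < v i" "v i \<le> p (Suc i)" "p (Suc i) \<le> u (Suc i)" "u (Suc i) < v (Suc i)"
      using uv1 uv2 i by auto
    then have ord: "u i < v i" "v i \<le> u (Suc i)" "u (Suc i) < v (Suc i)" "u i < v (Suc i)"
      by linarith+
    with G \<open>B \<inter> {u i<..<v (Suc i)} = {}\<close> have "affine_on G (u i) (v (Suc i))"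
      by (simp add: piecewise_affine_def)
    moreover have R1: "R i (G (v i) - G (u i))" and R2: "R (Suc i) (G (v (Suc i)) - G (u (Suc i)))"
      using uv1 uv2 i by simp_all
    then have "0 \<le> (-1)^i * (G (v i) - G (u i))" "0 \<le> - ((-1)^i * (G (v (Suc i)) - G (u (Suc i))))"
      unfolding R_def by (auto split: if_splits)
    ultimately have "G (v i) = G (u i)" "G (v (Suc i)) = G (u (Suc i))"
      using affine_on_no_turn[where u = "u i" and w = "v (Suc i)" and v = "v i" and v' = "u (Suc i)"
          and \<sigma> = "(-1)^i"] ord by auto
    then show False using R1 R2 turn[OF i] unfolding R_def by (auto split: if_splits)
  qed
  then have "\<forall>i. \<exists>c. Suc i < r \<longrightarrow> c \<in> B \<and> v i \<le> c \<and> c \<le> u (Suc i)" by blast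
  from choice[OF this] obtain c where c: "\<And>i. Suc i < r \<Longrightarrow> c i \<in> B \<and> v i \<le> c i \<and> c i \<le> u (Suc i)"
    by blast
  have step: "c i < c (Suc i)" if "Suc (Suc i) < r" for i
  proof -
    have "c i \<le> u (Suc i)" "u (Suc i) < v (Suc i)" "v (Suc i) \<le> c (Suc i)"
      using c[of i] c[of "Suc i"] uv[of "Suc i"] that by simp_all
    then show ?thesis by linarith
  qed
  have "c i < c j" if "i < j" "j < r - 1" for i j
    using that by (induction i j rule: less_Suc_induct) (auto intro: step)
  then have "inj_on c {..<r - 1}"
    by (intro strict_mono_on_imp_inj_on) (auto simp: monotone_on_def)
  moreover have "c ` {..<r - 1} \<subseteq> B" using c by auto
  ultimately show ?thesis using card_inj_on_le[OF _ _ finB] by fastforce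
qed

lemma ft_feasibleD:
  fixes x :: "nat \<Rightarrow> real^'n::finite"
  assumes "ft_feasible m K N TYPE('n)" "T \<subseteq> {1..K}" "card T = N" "inj_on x {1..K}"
    "\<forall>i\<in>{1..K}. \<bar>z i\<bar> \<le> 1"
  shows "\<exists>d1 d2 W1 b1 W2 b2 W3 b3. d1 + d2 = m \<and>
            (\<forall>i\<in>T. net3 d1 d2 W1 b1 W2 b2 W3 b3 (x i) = z i) \<and>
            (\<forall>i\<in>{1..K} - T. net3 d1 d2 W1 b1 W2 b2 W3 b3 (x i) = 0)"
proof -
  have "\<forall>T. T \<subseteq> {1..K} \<longrightarrow> card T = N \<longrightarrow>
      (\<forall>(x :: nat \<Rightarrow> real^'n) (z :: nat \<Rightarrow> real).
         inj_on x {1..K} \<longrightarrow> (\<forall>i\<in>{1..K}. \<bar>z i\<bar> \<le> 1) \<longrightarrow>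
         (\<exists>d1 d2 W1 b1 W2 b2 W3 b3. d1 + d2 = m \<and>
            (\<forall>i\<in>T. net3 d1 d2 W1 b1 W2 b2 W3 b3 (x i) = z i) \<and>
            (\<forall>i\<in>{1..K} - T. net3 d1 d2 W1 b1 W2 b2 W3 b3 (x i) = 0)))"
    using assms(1) unfolding ft_feasible_def by simp
  note h = mp[OF mp[OF spec[OF this, of T] assms(2)] assms(3)]
  note h2 = spec[OF spec[OF h, of x], of z]
  show ?thesis using mp[OF mp[OF h2 assms(4)] assms(5)] .
qed

lemma ft_feasible_fit_on_diagonal:
  fixes z :: "nat \<Rightarrow> real"
  assumes feas: "ft_feasible m K N TYPE('n::finite)" and T: "T \<subseteq> {1..K}" "card T = N"
    and z: "\<And>i. i \<in> T \<Longrightarrow> \<bar>z i\<bar> \<le> 1"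
  obtains d1 d2 a b1 W2 b2 W3 b3 where "d1 + d2 = m"
    "\<And>i. i \<in> {1..K} \<Longrightarrow> net3_1d d1 d2 a b1 W2 b2 W3 b3 (real i) = (if i \<in> T then z i else 0)"
proof -
  define one :: "real^'n" where "one = (\<chi> j. 1)"
  define x where "x i = real i *\<^sub>R one" for i
  have inj: "inj_on x {1..K}"
  proof (rule inj_onI)
    fix i j assume "x i = x j"
    then have "x i $ undefined = x j $ undefined" by simp
    then show "i = j" by (simp add: x_def one_def)
  qed
  have bound: "\<forall>i\<in>{1..K}. \<bar>if i \<in> T then z i else 0\<bar> \<le> 1" using z by simp
  from ft_feasibleD[where z = "\<lambda>i. if i \<in> T then z i else 0", OF feas T inj bound]
  obtain d1 d2 W1 b1 W2 b2 W3 b3 where "d1 + d2 = m"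
    "\<forall>i\<in>T. net3 d1 d2 W1 b1 W2 b2 W3 b3 (x i) = (if i \<in> T then z i else 0)"
    "\<forall>i\<in>{1..K} - T. net3 d1 d2 W1 b1 W2 b2 W3 b3 (x i) = 0"
    by blast
  then show thesis
    by (intro that[of d1 d2 "\<lambda>j. W1 j \<bullet> one" b1 W2 b2 W3 b3]) (auto simp: x_def net3_on_line)
qed

lemma exists_superset_of_multiples_of_3:
  assumes "C \<le> K" "C \<le> 3 * N + 2" "N \<le> K"
  obtains T where "T \<subseteq> {1..K}" "card T = N" "{i \<in> {1..C}. 3 dvd i} \<subseteq> T"
proof -
  define T0 where "T0 = {i \<in> {1..C}. 3 dvd i}"
  have "T0 \<subseteq> (\<lambda>j. 3 * j) ` {1..C div 3}"
  proof
    fix i assume "i \<in> T0"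
    then have "i = 3 * (i div 3)" "i div 3 \<in> {1..C div 3}"
      unfolding T0_def by (auto intro: div_le_mono)
    then show "i \<in> (\<lambda>j. 3 * j) ` {1..C div 3}" by (rule image_eqI)
  qed
  then have "card T0 \<le> C div 3"
    using card_mono[OF _ \<open>T0 \<subseteq> _\<close>] card_image_le[of "{1..C div 3}" "\<lambda>j. 3 * j"] by simp
  also have "\<dots> \<le> N" using assms(2) by simp
  finally have cT0: "card T0 \<le> N" .
  have T0K: "T0 \<subseteq> {1..K}" using assms(1) unfolding T0_def by auto
  then have "finite T0" using finite_subset by blast
  with T0K have "N - card T0 \<le> card ({1..K} - T0)" using assms(3) by (simp add: card_Diff_subset)
  then obtain E where E: "E \<subseteq> {1..K} - T0" "card E = N - card T0" "finite E"
    by (rule obtain_subset_with_card_n)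
  with \<open>finite T0\<close> have "card (T0 \<union> E) = N" using E cT0 by (subst card_Un_disjoint) auto
  with E(1) T0K show thesis by (intro that[of "T0 \<union> E"]) (auto simp: T0_def)
qed

lemma alternating_signs_on_thirds:
  fixes G :: "real \<Rightarrow> real"
  assumes val: "\<forall>i\<in>{1..K}. G (real i) = (if i \<in> T then (-1)^i else 0)"
    and thirds: "{i \<in> {1..C}. 3 dvd i} \<subseteq> T" and "C \<le> K"
  shows "i < C - 1 \<Longrightarrow> 0 \<le> (-1)^i * (G (real (Suc i + 1)) - G (real (i + 1)))"
    and "Suc i < C - 1 \<Longrightarrow>
      G (real (i + 1)) \<noteq> G (real (Suc i + 1)) \<or> G (real (Suc i + 1)) \<noteq> G (real (Suc (Suc i) + 1))"
proof -
  have incr: "(-1)^i * (G (real (Suc i + 1)) - G (real (i + 1))) =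
      (if Suc i + 1 \<in> T then 1 else 0) + (if i + 1 \<in> T then 1 else 0)" if "i + 2 \<le> K" for i
  proof -
    define \<sigma> :: real where "\<sigma> = (-1)^i"
    have "\<sigma> * \<sigma> = 1" unfolding \<sigma>_def by (induction i) auto
    moreover have "G (real (Suc i + 1)) = (if Suc i + 1 \<in> T then \<sigma> else 0)"
      using bspec[OF val, of "Suc i + 1"] that by (simp add: \<sigma>_def)
    moreover have "G (real (i + 1)) = (if i + 1 \<in> T then - \<sigma> else 0)"
      using bspec[OF val, of "i + 1"] that by (simp add: \<sigma>_def)
    ultimately show ?thesis unfolding \<sigma>_def[symmetric] by (simp add: algebra_simps)
  qed
  show "0 \<le> (-1)^i * (G (real (Suc i + 1)) - G (real (i + 1)))" if "i < C - 1"
    using incr[of i] that \<open>C \<le> K\<close> by simp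
  show "G (real (i + 1)) \<noteq> G (real (Suc i + 1)) \<or> G (real (Suc i + 1)) \<noteq> G (real (Suc (Suc i) + 1))"
    if i: "Suc i < C - 1"
  proof -
    have "i + 1 \<in> {1..C}" "i + 2 \<in> {1..C}" "i + 3 \<in> {1..C}" using i by auto
    moreover have "3 dvd (i + 1) \<or> 3 dvd (i + 2) \<or> 3 dvd (i + 3)" by presburger
    ultimately have T3: "i + 1 \<in> T \<or> i + 2 \<in> T \<or> i + 3 \<in> T" using thirds by blast
    have K3: "i + 3 \<le> K" using i \<open>C \<le> K\<close> by simp
    show ?thesis
    proof (cases "i + 1 \<in> T \<or> i + 2 \<in> T")
      case True
      then have "(-1)^i * (G (real (Suc i + 1)) - G (real (i + 1))) \<noteq> 0" using incr[of i] K3 by auto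
      then show ?thesis by auto
    next
      case False
      with T3 have "i + 3 \<in> T" by blast
      then have "Suc (Suc i) + 1 \<in> T" by (simp add: numeral_3_eq_3)
      then have "(-1)^Suc i * (G (real (Suc (Suc i) + 1)) - G (real (Suc i + 1))) \<noteq> 0"
        using incr[of "Suc i"] K3 by auto
      then show ?thesis by auto
    qed
  qed
qed

text \<open>The witnesses: samples \<open>i \<cdot> (1,\<dots>,1)\<close>, targets \<open>(-1)^i\<close> on a set \<open>T\<close> containing every third of the
  first \<open>min K (3N+2)\<close> samples. Along this line, \<open>G\<close> must change direction in every gap.\<close>
lemma ft_feasible_necessary:
  assumes feas: "ft_feasible m K N TYPE('n::finite)" and K: "3 \<le> K" and N: "1 \<le> N" "N \<le> K"
  shows "\<exists>d1 d2. d1 + d2 = m \<and> 0 < d1 \<and> 0 < d2 \<and> ((d1, d2) = (1, 1) \<longrightarrow> K = 3) \<and>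
    min K (3 * N + 2) \<le> d1 + d2 * (d1 + 1) + 2"
proof -
  define C where "C = min K (3 * N + 2)"
  have C: "3 \<le> C" "C \<le> K" "C \<le> 3 * N + 2" using K N unfolding C_def by auto
  obtain T where T: "T \<subseteq> {1..K}" "card T = N" and thirds: "{i \<in> {1..C}. 3 dvd i} \<subseteq> T"
    using exists_superset_of_multiples_of_3[OF C(2,3) N(2)] by blast
  have "\<bar>(-1::real)^i\<bar> \<le> 1" for i by (simp add: power_abs)
  then obtain d1 d2 a b1 W2 b2 W3 b3 where dm: "d1 + d2 = m" and
    val: "\<And>i. i \<in> {1..K} \<Longrightarrow> net3_1d d1 d2 a b1 W2 b2 W3 b3 (real i) = (if i \<in> T then (-1)^i else 0)"
    using ft_feasible_fit_on_diagonal[OF feas T, of "\<lambda>i. (-1)^i"] by blast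
  define G where "G = net3_1d d1 d2 a b1 W2 b2 W3 b3"
  have "3 \<in> T" using thirds C by auto
  then have G3: "G 3 = -1" using val[of 3] K by (simp add: G_def)
  have G2: "0 \<le> G 2" using val[of 2] K by (simp add: G_def)
  have "\<not> (d1 = 0 \<or> d2 = 0)"
  proof
    assume "d1 = 0 \<or> d2 = 0"
    then have "G 2 = G 3" unfolding G_def by (rule net3_1d_constant_if_degenerate)
    with G2 G3 show False by simp
  qed
  then have pos: "0 < d1" "0 < d2" by auto
  have "K = 3" if "(d1, d2) = (1, 1)"
  proof (rule ccontr)
    assume "K \<noteq> 3"
    then have "0 \<le> G 4" using val[of 4] K by (simp add: G_def)
    moreover have "mono G \<or> antimono G"
      using that net3_1d_single_neurons_monotone unfolding G_def by auto
    ultimately show False using G2 G3 by (auto dest: monoD[of G 2 3] antimonoD[of G 3 4])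
  qed
  obtain B where B: "card B \<le> d1 + d2 * (d1 + 1)" "piecewise_affine G B"
    using net3_1d_piecewise_affine unfolding G_def by blast
  have "\<forall>i\<in>{1..K}. G (real i) = (if i \<in> T then (-1)^i else 0)"
    using val by (simp add: G_def)
  note alternation = alternating_signs_on_thirds[OF this thirds C(2)]
  have "C - 1 - 1 \<le> card B"
  proof (rule alternating_increments_force_breaks[OF B(2), of "C - 1" "\<lambda>i. real (i + 1)"])
    show "0 \<le> (-1)^i * (G (real (Suc i + 1)) - G (real (i + 1)))" if "i < C - 1" for i
      using that by (rule alternation(1))
    show "G (real (i + 1)) \<noteq> G (real (Suc i + 1)) \<or> G (real (Suc i + 1)) \<noteq> G (real (Suc (Suc i) + 1))"
      if "Suc i < C - 1" for i
      using that by (rule alternation(2))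
  qed simp
  then have "min K (3 * N + 2) \<le> d1 + d2 * (d1 + 1) + 2"
    using B(1) C(1) unfolding C_def[symmetric] by linarith
  with pos dm \<open>(d1, d2) = (1, 1) \<Longrightarrow> K = 3\<close> show ?thesis by blast
qed


section \<open>Block-wise fitting\<close>

text \<open>Samples are numbered \<open>0, 1, 2, \<dots>\<close> in increasing order of their projections. Block \<open>b < L\<close>
  starts at sample \<open>f b\<close>; the last block is unbounded.\<close>
definition block_partition :: "nat \<Rightarrow> (nat \<Rightarrow> nat) \<Rightarrow> bool" where
  "block_partition L f \<longleftrightarrow> 1 \<le> L \<and> f 0 = 0 \<and> strict_mono f"

definition block_of :: "nat \<Rightarrow> (nat \<Rightarrow> nat) \<Rightarrow> nat \<Rightarrow> nat" where
  "block_of L f s = Max {b. b < L \<and> f b \<le> s}"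

text \<open>At the first sample of a block the jump is measured from \<open>0\<close>.\<close>
definition block_jump :: "nat \<Rightarrow> (nat \<Rightarrow> nat) \<Rightarrow> (nat \<Rightarrow> real) \<Rightarrow> nat \<Rightarrow> real" where
  "block_jump L f y r = y r - (if r = f (block_of L f r) then 0 else y (r - 1))"

definition block_sparse :: "nat \<Rightarrow> nat \<Rightarrow> (nat \<Rightarrow> nat) \<Rightarrow> nat \<Rightarrow> (nat \<Rightarrow> real) \<Rightarrow> bool" where
  "block_sparse K L f P y \<longleftrightarrow>
     (\<forall>b<L. card {r. r < K \<and> block_of L f r = b \<and> block_jump L f y r \<noteq> 0} \<le> P)"

lemma
  assumes "block_partition L f"
  shows block_of_less: "block_of L f s < L" and block_start_le: "f (block_of L f s) \<le> s"
proof -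
  have "0 \<in> {b. b < L \<and> f b \<le> s}" using assms by (simp add: block_partition_def)
  then have "block_of L f s \<in> {b. b < L \<and> f b \<le> s}"
    unfolding block_of_def by (intro Max_in) auto
  then show "block_of L f s < L" "f (block_of L f s) \<le> s" by auto
qed

lemma le_block_of: "b < L \<Longrightarrow> f b \<le> s \<Longrightarrow> b \<le> block_of L f s"
  unfolding block_of_def by (intro Max_ge) auto

lemma block_of_mono: "block_partition L f \<Longrightarrow> s \<le> s' \<Longrightarrow> block_of L f s \<le> block_of L f s'"
  by (meson block_of_less block_start_le le_block_of order.trans)

lemma block_start_le_iff:
  assumes "block_partition L f" "b < L"
  shows "f b \<le> s \<longleftrightarrow> b \<le> block_of L f s"
proof
  assume "b \<le> block_of L f s"
  then have "f b \<le> f (block_of L f s)"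
    using assms(1) by (simp add: block_partition_def strict_mono_less_eq)
  also have "\<dots> \<le> s" using assms(1) by (rule block_start_le)
  finally show "f b \<le> s" .
qed (use assms le_block_of in blast)

lemma sum_block_jump:
  assumes blocks: "block_partition L f"
  shows "(\<Sum>r\<in>{f (block_of L f s)..s}. block_jump L f y r) = y s"
proof (induction s)
  case 0
  have "f (block_of L f 0) = 0" using block_start_le[OF blocks, of 0] by simp
  then show ?case by (simp add: block_jump_def)
next
  case (Suc s)
  define b where "b = block_of L f (Suc s)"
  show ?case
  proof (cases "f b = Suc s")
    case True
    then show ?thesis by (simp add: block_jump_def b_def)
  next
    case False
    then have "f b \<le> s" using block_start_le[OF blocks, of "Suc s"] unfolding b_def by simp
    then have "block_of L f s = b"
      using le_block_of[OF block_of_less[OF blocks]] block_of_mono[OF blocks, of s "Suc s"]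
      unfolding b_def by (meson antisym le_SucI order.refl)
    with Suc.IH \<open>f b \<le> s\<close> False show ?thesis
      by (simp add: block_jump_def b_def)
  qed
qed

lemma sum_nonzero_block_jumps:
  assumes blocks: "block_partition L f" and "s < K"
  shows "(\<Sum>r | r < K \<and> block_of L f r = block_of L f s \<and> block_jump L f y r \<noteq> 0 \<and> r \<le> s.
           block_jump L f y r) = y s"
proof -
  have "{r. r < K \<and> block_of L f r = block_of L f s \<and> block_jump L f y r \<noteq> 0 \<and> r \<le> s}
      = {r \<in> {f (block_of L f s)..s}. block_jump L f y r \<noteq> 0}"
  proof (intro set_eqI iffI)
    fix r assume r: "r \<in> {r \<in> {f (block_of L f s)..s}. block_jump L f y r \<noteq> 0}"
    then have "block_of L f s \<le> block_of L f r"
      using le_block_of[OF block_of_less[OF blocks]] by auto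
    moreover have "block_of L f r \<le> block_of L f s" using r block_of_mono[OF blocks] by auto
    ultimately show "r \<in> {r. r < K \<and> block_of L f r = block_of L f s \<and> block_jump L f y r \<noteq> 0 \<and> r \<le> s}"
      using r \<open>s < K\<close> by auto
  next
    fix r assume "r \<in> {r. r < K \<and> block_of L f r = block_of L f s \<and> block_jump L f y r \<noteq> 0 \<and> r \<le> s}"
    then show "r \<in> {r \<in> {f (block_of L f s)..s}. block_jump L f y r \<noteq> 0}"
      using block_start_le[OF blocks, of r] by auto
  qed
  then have "(\<Sum>r | r < K \<and> block_of L f r = block_of L f s \<and> block_jump L f y r \<noteq> 0 \<and> r \<le> s.
      block_jump L f y r) = (\<Sum>r \<in> {r \<in> {f (block_of L f s)..s}. block_jump L f y r \<noteq> 0}. block_jump L f y r)"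
    by (simp only:)
  also have "\<dots> = (\<Sum>r\<in>{f (block_of L f s)..s}. block_jump L f y r)"
    by (rule sum.mono_neutral_left) auto
  also have "\<dots> = y s" by (rule sum_block_jump[OF blocks])
  finally show ?thesis .
qed

definition spaced :: "real \<Rightarrow> (nat \<Rightarrow> real) \<Rightarrow> bool" where
  "spaced g q \<longleftrightarrow> (\<forall>s. q s + g \<le> q (Suc s))"

lemma spaced_less:
  assumes "spaced g q" "0 \<le> g" "s < r"
  shows "q s + g \<le> q r"
  using \<open>s < r\<close>
proof (induction r)
  case (Suc r)
  have "q r + g \<le> q (Suc r)" using assms(1) by (simp add: spaced_def)
  with Suc \<open>0 \<le> g\<close> show ?case by (cases "s = r") auto
qed simp

lemma relu_spaced:
  assumes q: "spaced g q" and "0 \<le> \<theta>" "\<theta> \<le> g"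
  shows "relu (q s - q r + \<theta>) = (if r \<le> s then q s - q r + \<theta> else 0)"
proof (cases "r \<le> s")
  case True
  then have "q r \<le> q s" using spaced_less[OF q, of r s] assms by (cases "r = s") auto
  with True \<open>0 \<le> \<theta>\<close> show ?thesis by (simp add: relu_def)
next
  case False
  then have "q s + g \<le> q r" using spaced_less[OF q] assms by simp
  with False \<open>\<theta> \<le> g\<close> show ?thesis by (simp add: relu_def)
qed

lemma two_ramps_span_affine:
  fixes \<gamma> \<gamma>' :: real
  assumes "\<gamma> \<noteq> \<gamma>'"
  obtains w w' where "\<And>t. w * (t - \<gamma>) + w' * (t - \<gamma>') = \<alpha> * t + \<beta>"
proof
  fix t
  define w' where "w' = - (\<beta> + \<gamma> * \<alpha>) / (\<gamma>' - \<gamma>)"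
  have "w' * (\<gamma>' - \<gamma>) = - (\<beta> + \<gamma> * \<alpha>)" using assms by (simp add: w'_def)
  then show "(\<alpha> - w') * (t - \<gamma>) + w' * (t - \<gamma>') = \<alpha> * t + \<beta>" by (simp add: algebra_simps)
qed

lemma sum_lessThan_pairs:
  fixes F :: "nat \<Rightarrow> 'a::comm_monoid_add"
  shows "(\<Sum>k<2 * P. F k) = (\<Sum>i<P. F (2 * i) + F (2 * i + 1))"
  by (induction P) (simp_all add: algebra_simps)

lemma sum_lessThan_if_less:
  fixes F :: "nat \<Rightarrow> 'a::comm_monoid_add"
  shows "m \<le> n \<Longrightarrow> (\<Sum>i<n. if i < m then F i else 0) = (\<Sum>i<m. F i)"
  by (rule sum.mono_neutral_cong_right) auto

text \<open>Neuron \<open>0\<close> is the ramp \<open>q s - q 0 + 1\<close>, positive at every sample; neurons \<open>2i+1, 2i+2\<close> are ramps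
  starting between samples \<open>f (i+1) - 1\<close> and \<open>f (i+1)\<close>, and their span contains every affine function
  switched on from block \<open>i+1\<close> onwards. The first layer does not depend on the target coefficients.\<close>
lemma first_layer_block_affine:
  fixes q :: "nat \<Rightarrow> real"
  assumes q: "spaced g q" and g: "0 < g" and blocks: "block_partition L f" and d1: "2 * L - 1 \<le> d1"
  obtains a b1 where "\<And>A c :: nat \<Rightarrow> real. \<exists>W e. \<forall>s.
     (\<Sum>j<d1. W j * relu (a j * q s + b1 j)) + e = A (block_of L f s) * q s + c (block_of L f s)"
proof
  have L: "1 \<le> L" using blocks by (simp add: block_partition_def)
  define \<theta> :: "nat \<Rightarrow> real" where "\<theta> j = (if odd j then 2 * g / 3 else g / 3)" for j
  define a :: "nat \<Rightarrow> real" where "a j = (if j < 2 * L - 1 then 1 else 0)" for j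
  define b1 where "b1 j = (if j = 0 then 1 - q 0
      else if j < 2 * L - 1 then - q (f ((j + 1) div 2)) + \<theta> j else 0)" for j
  fix A c :: "nat \<Rightarrow> real"
  show "\<exists>W e. \<forall>s. (\<Sum>j<d1. W j * relu (a j * q s + b1 j)) + e = A (block_of L f s) * q s + c (block_of L f s)"
  proof -
    let ?F = "\<lambda>b t. A b * t + c b"
    have "\<forall>b. \<exists>w w'. \<forall>t. w * (t - (q (f b) - 2 * g / 3)) + w' * (t - (q (f b) - g / 3))
        = (A b - A (b - 1)) * t + (c b - c (b - 1))"
    proof
      fix b
      have "q (f b) - 2 * g / 3 \<noteq> q (f b) - g / 3" using g by simp
      then show "\<exists>w w'. \<forall>t. w * (t - (q (f b) - 2 * g / 3)) + w' * (t - (q (f b) - g / 3))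
          = (A b - A (b - 1)) * t + (c b - c (b - 1))"
        by (metis two_ramps_span_affine)
    qed
    from choice[OF this] obtain w where "\<forall>b. \<exists>w'. \<forall>t. w b * (t - (q (f b) - 2 * g / 3)) + w' * (t - (q (f b) - g / 3))
        = (A b - A (b - 1)) * t + (c b - c (b - 1))"
      by blast
    from choice[OF this] obtain w' where ww: "\<And>b t. w b * (t - (q (f b) - 2 * g / 3)) + w' b * (t - (q (f b) - g / 3))
        = (A b - A (b - 1)) * t + (c b - c (b - 1))"
      by blast
    define W where "W j = (if j = 0 then A 0 else if j < 2 * L - 1 then
        (if odd j then w ((j + 1) div 2) else w' ((j + 1) div 2)) else 0)" for j
    have "(\<Sum>j<d1. W j * relu (a j * q s + b1 j)) + (c 0 + A 0 * (q 0 - 1)) = ?F (block_of L f s) (q s)"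
      for s
    proof -
      define N where "N j = W j * relu (a j * q s + b1 j)" for j
      have pair: "N (2 * i + 1) + N (2 * i + 2) =
          (if i < block_of L f s then ?F (Suc i) (q s) - ?F i (q s) else 0)" if "i < L - 1" for i
      proof -
        have "2 * i + 2 < 2 * L - 1" using that by arith
        have iff: "f (Suc i) \<le> s \<longleftrightarrow> i < block_of L f s"
          using block_start_le_iff[OF blocks, of "Suc i" s] that by auto
        have N: "N (2 * i + 1) + N (2 * i + 2) = w (Suc i) * relu (q s - q (f (Suc i)) + 2 * g / 3)
            + w' (Suc i) * relu (q s - q (f (Suc i)) + g / 3)"
          using \<open>2 * i + 2 < 2 * L - 1\<close> by (simp add: N_def W_def a_def b1_def \<theta>_def algebra_simps)
        show ?thesis
        proof (cases "f (Suc i) \<le> s")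
          case True
          have "relu (q s - q (f (Suc i)) + 2 * g / 3) = q s - (q (f (Suc i)) - 2 * g / 3)"
            "relu (q s - q (f (Suc i)) + g / 3) = q s - (q (f (Suc i)) - g / 3)"
            using relu_spaced[OF q, of _ s "f (Suc i)"] True g by simp_all
          then have "N (2 * i + 1) + N (2 * i + 2) = w (Suc i) * (q s - (q (f (Suc i)) - 2 * g / 3))
              + w' (Suc i) * (q s - (q (f (Suc i)) - g / 3))"
            by (simp only: N)
          also have "\<dots> = ?F (Suc i) (q s) - ?F i (q s)"
            by (subst ww) (simp add: algebra_simps)
          finally show ?thesis using True iff by simp
        next
          case False
          then have "relu (q s - q (f (Suc i)) + 2 * g / 3) = 0" "relu (q s - q (f (Suc i)) + g / 3) = 0"
            using relu_spaced[OF q, of _ s "f (Suc i)"] g by simp_all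
          then have "N (2 * i + 1) + N (2 * i + 2) = 0" by (simp only: N)
          then show ?thesis using False iff by simp
        qed
      qed
      have "(\<Sum>j<d1. N j) = (\<Sum>j<Suc (2 * (L - 1)). N j)"
        using L d1 by (intro sum.mono_neutral_right) (auto simp: N_def W_def)
      also have "\<dots> = N 0 + (\<Sum>i<L - 1. N (2 * i + 1) + N (2 * i + 2))"
        by (simp only: sum.lessThan_Suc_shift sum_lessThan_pairs[where P = "L - 1" and F = "\<lambda>j. N (Suc j)"]) simp
      also have "N 0 = A 0 * (q s - q 0 + 1)"
        using L relu_spaced[OF q, of 0 s 0] g by (simp add: N_def W_def a_def b1_def relu_def)
      also have "(\<Sum>i<L - 1. N (2 * i + 1) + N (2 * i + 2)) =
          (\<Sum>i<L - 1. if i < block_of L f s then ?F (Suc i) (q s) - ?F i (q s) else 0)"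
        by (rule sum.cong[OF refl], rule pair) simp
      also have "\<dots> = (\<Sum>i<block_of L f s. ?F (Suc i) (q s) - ?F i (q s))"
        using block_of_less[OF blocks, of s] by (intro sum_lessThan_if_less) simp
      also have "\<dots> = ?F (block_of L f s) (q s) - ?F 0 (q s)"
        by (rule sum_lessThan_telescope)
      finally show ?thesis by (simp add: N_def algebra_simps)
    qed
    then show ?thesis by blast
  qed
qed

lemma relu_pair_step:
  assumes q: "spaced g q" and g: "0 < g" and D: "\<bar>D\<bar> \<le> 2"
  shows "8 / g * relu (q s - q r + g / 2) - 8 / g * relu (q s - q r + (g / 2 - D * g / 8))
      = (if r \<le> s then D else 0)"
proof -
  have "(- 2) * g \<le> D * g" "D * g \<le> 2 * g"
    using D g by (intro mult_right_mono; simp add: abs_le_iff)+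
  then have "0 \<le> g / 2 - D * g / 8" "g / 2 - D * g / 8 \<le> g" by simp_all
  then have "relu (q s - q r + (g / 2 - D * g / 8)) = (if r \<le> s then q s - q r + (g / 2 - D * g / 8) else 0)"
    by (rule relu_spaced[OF q])
  moreover have "relu (q s - q r + g / 2) = (if r \<le> s then q s - q r + g / 2 else 0)"
    by (rule relu_spaced[OF q]) (use g in simp_all)
  ultimately show ?thesis using g by (simp add: field_simps)
qed

lemma abs_block_jump_le:
  assumes "\<And>s. s < K \<Longrightarrow> \<bar>y s\<bar> \<le> 1" "r < K"
  shows "\<bar>block_jump L f y r\<bar> \<le> 2"
proof -
  have "\<bar>y r\<bar> \<le> 1" "\<bar>y (r - 1)\<bar> \<le> 1" using assms by auto
  then show ?thesis unfolding block_jump_def by (auto simp: abs_le_iff)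
qed

text \<open>Second-layer neurons \<open>2i, 2i+1\<close> realise, inside every block simultaneously, the step of the
  \<open>i\<close>-th nonzero jump of that block; their first-layer inputs are block-wise affine in \<open>q s\<close>.\<close>
lemma net3_1d_fit_block_sparse:
  fixes q y :: "nat \<Rightarrow> real"
  assumes q: "spaced g q" and g: "0 < g" and blocks: "block_partition L f"
    and d1: "2 * L - 1 \<le> d1" and d2: "2 * P \<le> d2"
    and y: "\<And>s. s < K \<Longrightarrow> \<bar>y s\<bar> \<le> 1" and sparse: "block_sparse K L f P y"
  obtains a b1 W2 b2 W3 where "\<And>s. s < K \<Longrightarrow> net3_1d d1 d2 a b1 W2 b2 W3 0 (q s) = y s"
proof -
  obtain a b1 where layer1: "\<And>A c :: nat \<Rightarrow> real. \<exists>W e. \<forall>s.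
      (\<Sum>j<d1. W j * relu (a j * q s + b1 j)) + e = A (block_of L f s) * q s + c (block_of L f s)"
    using first_layer_block_affine[OF q g blocks d1] by blast
  define J where "J b = {r. r < K \<and> block_of L f r = b \<and> block_jump L f y r \<noteq> 0}" for b
  have "\<forall>b. \<exists>e. bij_betw e {..<card (J b)} (J b)"
    using ex_bij_betw_nat_finite[of "J _"] by (simp add: J_def atLeast0LessThan)
  from choice[OF this] obtain en where en: "\<And>b. bij_betw (en b) {..<card (J b)} (J b)" by blast
  define A :: "nat \<Rightarrow> nat \<Rightarrow> real" where "A k b = (if k div 2 < card (J b) then 1 else 0)" for k b
  define c :: "nat \<Rightarrow> nat \<Rightarrow> real" where "c k b = (if k div 2 < card (J b)
      then - q (en b (k div 2)) + g / 2 - (if odd k then block_jump L f y (en b (k div 2)) * g / 8 else 0)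
      else -1)" for k b
  have "\<forall>k. \<exists>W e. \<forall>s. (\<Sum>j<d1. W j * relu (a j * q s + b1 j)) + e
      = A k (block_of L f s) * q s + c k (block_of L f s)"
  proof
    fix k
    show "\<exists>W e. \<forall>s. (\<Sum>j<d1. W j * relu (a j * q s + b1 j)) + e
        = A k (block_of L f s) * q s + c k (block_of L f s)"
      by (rule layer1[of "A k" "c k"])
  qed
  from choice[OF this] obtain W2 where "\<forall>k. \<exists>e. \<forall>s. (\<Sum>j<d1. W2 k j * relu (a j * q s + b1 j)) + e
      = A k (block_of L f s) * q s + c k (block_of L f s)"
    by blast
  from choice[OF this] obtain b2 where layer2: "\<And>k s. (\<Sum>j<d1. W2 k j * relu (a j * q s + b1 j)) + b2 k
      = A k (block_of L f s) * q s + c k (block_of L f s)"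
    by blast
  define W3 where "W3 k = (if k < 2 * P then (if even k then 8 / g else - 8 / g) else 0)" for k
  have "net3_1d d1 d2 a b1 W2 b2 W3 0 (q s) = y s" if s: "s < K" for s
  proof -
    define b where "b = block_of L f s"
    define R where "R k = W3 k * relu (A k b * q s + c k b)" for k
    have pair: "R (2 * i) + R (2 * i + 1) =
        (if i < card (J b) then (if en b i \<le> s then block_jump L f y (en b i) else 0) else 0)"
      if "i < P" for i
    proof (cases "i < card (J b)")
      case True
      then have "en b i \<in> J b" using en[of b] by (auto simp: bij_betw_def)
      then have "en b i < K" by (simp add: J_def)
      with y have "\<bar>block_jump L f y (en b i)\<bar> \<le> 2" by (rule abs_block_jump_le)
      from relu_pair_step[OF q g this, of s "en b i"] True that show ?thesis
        by (simp add: R_def W3_def A_def c_def algebra_simps)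
    qed (simp add: R_def A_def c_def relu_def)
    have "card (J b) \<le> P" using sparse block_of_less[OF blocks] by (simp add: block_sparse_def J_def b_def)
    have "net3_1d d1 d2 a b1 W2 b2 W3 0 (q s) = (\<Sum>k<d2. R k)"
      by (simp add: net3_1d_def layer2 R_def b_def)
    also have "\<dots> = (\<Sum>k<2 * P. R k)"
      using d2 by (intro sum.mono_neutral_right) (auto simp: R_def W3_def)
    also have "\<dots> = (\<Sum>i<P. R (2 * i) + R (2 * i + 1))" by (rule sum_lessThan_pairs)
    also have "\<dots> = (\<Sum>i<P. if i < card (J b) then (if en b i \<le> s then block_jump L f y (en b i) else 0) else 0)"
      by (rule sum.cong[OF refl], rule pair) simp
    also have "\<dots> = (\<Sum>i<card (J b). if en b i \<le> s then block_jump L f y (en b i) else 0)"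
      using \<open>card (J b) \<le> P\<close> by (rule sum_lessThan_if_less)
    also have "\<dots> = (\<Sum>r\<in>J b. if r \<le> s then block_jump L f y r else 0)"
      by (rule sum.reindex_bij_betw[OF en])
    also have "\<dots> = (\<Sum>r\<in>{r \<in> J b. r \<le> s}. block_jump L f y r)"
      by (rule sum.inter_filter[symmetric]) (simp add: J_def)
    also have "{r \<in> J b. r \<le> s} =
        {r. r < K \<and> block_of L f r = block_of L f s \<and> block_jump L f y r \<noteq> 0 \<and> r \<le> s}"
      by (auto simp: J_def b_def)
    also have "(\<Sum>r\<in>\<dots>. block_jump L f y r) = y s"
      by (rule sum_nonzero_block_jumps[OF blocks s])
    finally show ?thesis .
  qed
  then show thesis by (rule that)
qed

lemma exists_injective_projection:
  fixes x :: "nat \<Rightarrow> 'a::euclidean_space"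
  assumes inj: "inj_on x S" and fin: "finite S"
  obtains w where "inj_on (\<lambda>i. w \<bullet> x i) S"
proof -
  define Bad where "Bad = (\<Union>(i, j) \<in> Set.filter (\<lambda>(i, j). i \<noteq> j) (S \<times> S). {w. (x i - x j) \<bullet> w = 0})"
  have "negligible Bad"
    unfolding Bad_def
  proof (intro negligible_Union finite_imageI)
    show "finite (Set.filter (\<lambda>(i, j). i \<noteq> j) (S \<times> S))" using fin by simp
  next
    fix T assume "T \<in> (\<lambda>(i, j). {w. (x i - x j) \<bullet> w = 0}) ` Set.filter (\<lambda>(i, j). i \<noteq> j) (S \<times> S)"
    then obtain i j where "i \<in> S" "j \<in> S" "i \<noteq> j" "T = {w. (x i - x j) \<bullet> w = 0}" by auto
    moreover have "x i - x j \<noteq> 0" using inj calculation by (auto simp: inj_on_def)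
    ultimately show "negligible T" by (simp add: negligible_hyperplane)
  qed
  then have "Bad \<noteq> UNIV" using non_negligible_UNIV by metis
  then obtain w where "w \<notin> Bad" by blast
  then have "inj_on (\<lambda>i. w \<bullet> x i) S"
    by (auto simp: Bad_def inj_on_def inner_commute inner_diff_right)
  then show thesis by (rule that)
qed

lemma exists_sorting_bij:
  fixes t :: "nat \<Rightarrow> real"
  assumes inj: "inj_on t S" and fin: "finite S"
  obtains \<sigma> where "bij_betw \<sigma> {..<card S} S" "\<And>r r'. r < r' \<Longrightarrow> r' < card S \<Longrightarrow> t (\<sigma> r) < t (\<sigma> r')"
proof -
  define xs where "xs = sorted_list_of_set (t ` S)"
  have set_xs: "set xs = t ` S" and srt: "sorted_wrt (<) xs" and dist: "distinct xs"
    unfolding xs_def using fin by simp_all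
  have len: "length xs = card S" unfolding xs_def using card_image[OF inj] by simp
  define \<sigma> where "\<sigma> r = inv_into S t (xs ! r)" for r
  have mem: "xs ! r \<in> t ` S" if "r < card S" for r using set_xs len that nth_mem by metis
  have t\<sigma>: "t (\<sigma> r) = xs ! r" if "r < card S" for r unfolding \<sigma>_def by (rule f_inv_into_f[OF mem[OF that]])
  have "inj_on \<sigma> {..<card S}"
    by (rule inj_onI) (metis t\<sigma> dist len lessThan_iff nth_eq_iff_index_eq)
  moreover have "\<sigma> ` {..<card S} \<subseteq> S" unfolding \<sigma>_def using mem by (auto intro: inv_into_into)
  ultimately have "bij_betw \<sigma> {..<card S} S"
    using fin by (simp add: bij_betw_def card_subset_eq card_image)
  moreover have "t (\<sigma> r) < t (\<sigma> r')" if "r < r'" "r' < card S" for r r'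
    using that t\<sigma> srt len sorted_wrt_nth_less[of "(<)" xs] by simp
  ultimately show thesis by (rule that)
qed

text \<open>Beyond the last sample the enumeration is continued with step \<open>1\<close>, so that the minimal gap
  \<open>g\<close> holds for all indices.\<close>
lemma exists_spaced_enumeration:
  fixes x :: "nat \<Rightarrow> 'a::euclidean_space"
  assumes inj: "inj_on x S" and fin: "finite S" and ne: "S \<noteq> {}"
  obtains w \<sigma> q g where "bij_betw \<sigma> {..<card S} S" "0 < g" "spaced g q"
    "\<And>r. r < card S \<Longrightarrow> q r = w \<bullet> x (\<sigma> r)"
proof -
  define K where "K = card S"
  have K: "1 \<le> K" using fin ne by (simp add: K_def Suc_le_eq card_gt_0_iff)
  obtain w where w: "inj_on (\<lambda>i. w \<bullet> x i) S" using exists_injective_projection[OF inj fin] .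
  obtain \<sigma> where \<sigma>: "bij_betw \<sigma> {..<K} S"
    and ord: "\<And>r r'. r < r' \<Longrightarrow> r' < K \<Longrightarrow> w \<bullet> x (\<sigma> r) < w \<bullet> x (\<sigma> r')"
    using exists_sorting_bij[OF w fin] unfolding K_def by blast
  define q where "q r = (if r < K then w \<bullet> x (\<sigma> r) else w \<bullet> x (\<sigma> (K - 1)) + real (r - (K - 1)))" for r
  define g where "g = Min ((\<lambda>s. q (Suc s) - q s) ` {..<K})"
  have diff: "0 < q (Suc s) - q s" if "s < K" for s
  proof (cases "Suc s < K")
    case True
    then show ?thesis using ord[of s "Suc s"] by (simp add: q_def)
  next
    case False
    then have "s = K - 1" using that by simp
    then show ?thesis using K by (simp add: q_def)
  qed
  have "0 < g" unfolding g_def using diff K by (subst Min_gr_iff) (auto simp: lessThan_empty_iff)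
  have g_le: "g \<le> q (Suc s) - q s" if "s < K" for s unfolding g_def using that by (intro Min_le) auto
  have "q s + g \<le> q (Suc s)" for s
  proof (cases "s < K")
    case False
    have "g \<le> q (Suc (K - 1)) - q (K - 1)" using g_le[of "K - 1"] K by simp
    also have "\<dots> = 1" using K by (simp add: q_def)
    finally show ?thesis using False K by (simp add: q_def)
  qed (use g_le in fastforce)
  with \<sigma> \<open>0 < g\<close> show thesis by (intro that[of \<sigma> g q w]) (auto simp: K_def q_def spaced_def)
qed

lemma ft_feasible_if_block_sparse:
  assumes K: "1 \<le> K" and d: "d1 + d2 = m" "2 * L - 1 \<le> d1" "2 * P \<le> d2"
    and blocks: "\<And>S. S \<subseteq> {..<K} \<Longrightarrow> card S = N \<Longrightarrow>
      \<exists>f. block_partition L f \<and> (\<forall>y. (\<forall>s. s \<notin> S \<longrightarrow> y s = 0) \<longrightarrow> block_sparse K L f P y)"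
  shows "ft_feasible m K N TYPE('n::finite)"
  unfolding ft_feasible_def
proof (intro allI impI)
  fix T :: "nat set" and x :: "nat \<Rightarrow> real^'n" and z :: "nat \<Rightarrow> real"
  assume T: "T \<subseteq> {1..K}" "card T = N" and x: "inj_on x {1..K}" and z: "\<forall>i\<in>{1..K}. \<bar>z i\<bar> \<le> 1"
  have "{1..K} \<noteq> {}" using K by simp
  then obtain w \<sigma> q g where \<sigma>': "bij_betw \<sigma> {..<card {1..K}} {1..K}" and g: "0 < g" and spaced: "spaced g q"
    and q': "\<And>r. r < card {1..K} \<Longrightarrow> q r = w \<bullet> x (\<sigma> r)"
    using exists_spaced_enumeration[OF x finite_atLeastAtMost] by metis
  have \<sigma>: "bij_betw \<sigma> {..<K} {1..K}" and q: "\<And>r. r < K \<Longrightarrow> q r = w \<bullet> x (\<sigma> r)"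
    using \<sigma>' q' by simp_all
  define S where "S = {r. r < K \<and> \<sigma> r \<in> T}"
  have "\<sigma> ` S = T" using \<sigma> T(1) unfolding S_def bij_betw_def by fastforce
  moreover have "inj_on \<sigma> S" using \<sigma> unfolding S_def bij_betw_def by (auto intro: inj_on_subset)
  ultimately have "card S = N" using T(2) card_image by fastforce
  then obtain f where blocks: "block_partition L f"
    and sparse: "\<forall>y. (\<forall>s. s \<notin> S \<longrightarrow> y s = 0) \<longrightarrow> block_sparse K L f P y"
    using blocks[of S] by (auto simp: S_def)
  define y where "y r = (if r \<in> S then z (\<sigma> r) else 0)" for r
  have "\<bar>y s\<bar> \<le> 1" if "s < K" for s
    using z that bij_betwE[OF \<sigma>] by (auto simp: y_def S_def)
  moreover have "block_sparse K L f P y" using sparse by (simp add: y_def)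
  ultimately obtain a b1 W2 b2 W3 where fit: "\<And>s. s < K \<Longrightarrow> net3_1d d1 d2 a b1 W2 b2 W3 0 (q s) = y s"
    using net3_1d_fit_block_sparse[OF spaced g blocks d(2,3)] by metis
  have val: "net3 d1 d2 (\<lambda>j. a j *\<^sub>R w) b1 W2 b2 W3 0 (x i) = (if i \<in> T then z i else 0)"
    if i: "i \<in> {1..K}" for i
  proof -
    have "i \<in> \<sigma> ` {..<K}" using i bij_betw_imp_surj_on[OF \<sigma>] by simp
    then obtain r where "r < K" "\<sigma> r = i" by auto
    then show ?thesis using fit[of r] q[of r] by (auto simp: net3_rank_one_rows y_def S_def)
  qed
  show "\<exists>d1 d2 W1 b1 W2 b2 W3 b3. d1 + d2 = m \<and>
      (\<forall>i\<in>T. net3 d1 d2 W1 b1 W2 b2 W3 b3 (x i) = z i) \<and>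
      (\<forall>i\<in>{1..K} - T. net3 d1 d2 W1 b1 W2 b2 W3 b3 (x i) = 0)"
    by (rule exI[of _ d1], rule exI[of _ d2], rule exI[of _ "\<lambda>j. a j *\<^sub>R w"], rule exI[of _ b1],
        rule exI[of _ W2], rule exI[of _ b2], rule exI[of _ W3], rule exI[of _ 0])
      (use d(1) T(1) val in auto)
qed

lemma block_partition_equal_blocks: "1 \<le> L \<Longrightarrow> 1 \<le> P \<Longrightarrow> block_partition L (\<lambda>b. b * P)"
  by (simp add: block_partition_def strict_mono_def)

lemma block_sparse_equal_blocks:
  assumes KLP: "K \<le> L * P" and L: "1 \<le> L" and P: "1 \<le> P"
  shows "block_sparse K L (\<lambda>b. b * P) P y"
  unfolding block_sparse_def
proof (intro allI impI)
  note blocks = block_partition_equal_blocks[OF L P]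
  fix b assume b: "b < L"
  have "{r. r < K \<and> block_of L (\<lambda>b. b * P) r = b \<and> block_jump L (\<lambda>b. b * P) y r \<noteq> 0} \<subseteq> {b * P..<b * P + P}"
  proof
    fix r assume "r \<in> {r. r < K \<and> block_of L (\<lambda>b. b * P) r = b \<and> block_jump L (\<lambda>b. b * P) y r \<noteq> 0}"
    then have r: "r < K" "b = block_of L (\<lambda>b. b * P) r" by auto
    have "b * P \<le> r" using block_start_le[OF blocks, of r] r(2) by simp
    moreover have "r < b * P + P"
    proof (cases "Suc b < L")
      case True
      show ?thesis
      proof (rule ccontr)
        assume "\<not> r < b * P + P"
        then have "Suc b \<le> block_of L (\<lambda>b. b * P) r" by (intro le_block_of[OF True]) simp
        with r(2) show False by simp
      qed
    next
      case False
      then have "L = Suc b" using b by simp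
      then show ?thesis using r(1) KLP by (simp add: algebra_simps)
    qed
    ultimately show "r \<in> {b * P..<b * P + P}" by simp
  qed
  then show "card {r. r < K \<and> block_of L (\<lambda>b. b * P) r = b \<and> block_jump L (\<lambda>b. b * P) y r \<noteq> 0} \<le> P"
    using card_mono[of "{b * P..<b * P + P}"] by fastforce
qed

lemma card_block_jumps_le:
  assumes blocks: "block_partition L f" and S: "finite S" and y: "\<And>s. s \<notin> S \<Longrightarrow> y s = 0"
  shows "card {r. r < K \<and> block_of L f r = b \<and> block_jump L f y r \<noteq> 0} \<le> 2 * card {r \<in> S. block_of L f r = b}"
proof -
  define A where "A = {r \<in> S. block_of L f r = b}"
  have "{r. r < K \<and> block_of L f r = b \<and> block_jump L f y r \<noteq> 0} \<subseteq> A \<union> Suc ` A"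
  proof
    fix r assume "r \<in> {r. r < K \<and> block_of L f r = b \<and> block_jump L f y r \<noteq> 0}"
    then have r: "r < K" "b = block_of L f r" "block_jump L f y r \<noteq> 0" by auto
    show "r \<in> A \<union> Suc ` A"
    proof (rule ccontr)
      assume "r \<notin> A \<union> Suc ` A"
      then have "r \<notin> A" "r \<notin> Suc ` A" by auto
      then have "y r = 0" using y r(2) by (auto simp: A_def)
      with r(3) have "r \<noteq> f (block_of L f r)" "y (r - 1) \<noteq> 0"
        by (auto simp: block_jump_def split: if_splits)
      then have start: "r \<noteq> f b" and "y (r - 1) \<noteq> 0" using r(2) by simp_all
      then have "r - 1 \<in> S" using y by blast
      have "f b \<le> r" using block_start_le[OF blocks, of r] r(2) by simp
      with start have "f b \<le> r - 1" "r = Suc (r - 1)" by auto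
      moreover have "block_of L f (r - 1) = b"
      proof (rule antisym)
        show "block_of L f (r - 1) \<le> b" using block_of_mono[OF blocks, of "r - 1" r] r(2) by simp
        show "b \<le> block_of L f (r - 1)"
          using block_of_less[OF blocks, of r] r(2) \<open>f b \<le> r - 1\<close> by (intro le_block_of) simp_all
      qed
      ultimately have "r \<in> Suc ` A" using \<open>r - 1 \<in> S\<close> by (auto simp: A_def image_iff)
      with \<open>r \<notin> Suc ` A\<close> show False by contradiction
    qed
  qed
  moreover have "finite A" using S by (simp add: A_def)
  ultimately have "card {r. r < K \<and> block_of L f r = b \<and> block_jump L f y r \<noteq> 0} \<le> card (A \<union> Suc ` A)"
    by (intro card_mono) auto
  also have "\<dots> \<le> card A + card (Suc ` A)" by (rule card_Un_le)
  also have "\<dots> \<le> 2 * card A" using card_image_le[OF \<open>finite A\<close>, of Suc] by simp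
  finally show ?thesis by (simp add: A_def)
qed

text \<open>Block \<open>b \<ge> 1\<close> starts at the \<open>(b v)\<close>-th element of \<open>S\<close> in increasing order (or beyond \<open>K\<close> when
  \<open>S\<close> has fewer elements), so that every block contains at most \<open>v\<close> elements of \<open>S\<close>.\<close>
lemma exists_blocks_bounded_count:
  assumes S: "S \<subseteq> {..<K}" and count: "card S \<le> L * v" and v: "1 \<le> v" and L: "1 \<le> L"
  obtains f where "block_partition L f" "\<And>b. b < L \<Longrightarrow> card {r \<in> S. block_of L f r = b} \<le> v"
proof -
  have finS: "finite S" using S finite_subset by blast
  define xs where "xs = sorted_list_of_set S"
  define N where "N = card S"
  have set_xs: "set xs = S" and len: "length xs = N" and srt: "sorted_wrt (<) xs"
    using finS by (simp_all add: xs_def N_def)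
  have less_iff: "xs ! i < xs ! j \<longleftrightarrow> i < j" if "i < N" "j < N" for i j
    using that srt len sorted_wrt_nth_less[of "(<)" xs] by (metis linorder_neq_iff order.asym)
  have xs_K: "xs ! i < K" if "i < N" for i using that set_xs len S nth_mem by fastforce
  define f where "f b = (if b = 0 then 0 else if b * v < N then xs ! (b * v) else K + b)" for b
  have "f b < f (Suc b)" for b
    using v less_iff[of "b * v" "Suc b * v"] less_iff[of 0 v] xs_K[of "b * v"] by (auto simp: f_def)
  then have blocks: "block_partition L f" using L by (simp add: block_partition_def f_def strict_mono_Suc_iff)
  have "card {r \<in> S. block_of L f r = b} \<le> v" if b: "b < L" for b
  proof -
    have "{r \<in> S. block_of L f r = b} \<subseteq> (\<lambda>i. xs ! i) ` {b * v..<Suc b * v}"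
    proof
      fix r assume "r \<in> {r \<in> S. block_of L f r = b}"
      then have r: "r \<in> S" "b = block_of L f r" by auto
      then obtain i where i: "i < N" "r = xs ! i" using set_xs len by (auto simp: in_set_conv_nth)
      have "f b \<le> r" using block_start_le[OF blocks, of r] r(2) by simp
      then have "b * v \<le> i" using i xs_K[OF i(1)] less_iff[of i "b * v"] by (auto simp: f_def split: if_splits)
      moreover have "i < Suc b * v"
      proof (cases "Suc b < L")
        case True
        have "r < f (Suc b)"
        proof (rule ccontr)
          assume "\<not> r < f (Suc b)"
          then have "Suc b \<le> block_of L f r" by (intro le_block_of[OF True]) simp
          with r(2) show False by simp
        qed
        then show ?thesis using i less_iff[of i "Suc b * v"] by (auto simp: f_def split: if_splits)
      next
        case False
        then have "L = Suc b" using b by simp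
        then show ?thesis using i count by (simp add: N_def)
      qed
      ultimately show "r \<in> (\<lambda>i. xs ! i) ` {b * v..<Suc b * v}" using i by auto
    qed
    then have "card {r \<in> S. block_of L f r = b} \<le> card ((\<lambda>i. xs ! i) ` {b * v..<Suc b * v})"
      by (intro card_mono) auto
    also have "\<dots> \<le> v" using card_image_le[of "{b * v..<Suc b * v}" "\<lambda>i. xs ! i"] by simp
    finally show ?thesis .
  qed
  with blocks show thesis by (rule that)
qed

lemma memorization_widths:
  fixes K m :: nat
  assumes "16 * K \<le> m^2"
  shows "K \<le> ((m + 2) div 4) * ((m - (2 * ((m + 2) div 4) - 1)) div 2)"
proof -
  obtain a c where m: "m = 4*a + c" "c < 4" by (metis div_mod_decomp mod_less_divisor zero_less_numeral mult.commute)
  have "c = 0 \<or> c = 1 \<or> c = 2 \<or> c = 3" using m(2) by auto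
  then show ?thesis
  proof (elim disjE)
    assume c: "c = 0"
    have u: "(m + 2) div 4 = a" using m c by presburger
    show ?thesis
    proof (cases "a = 0")
      case True then show ?thesis using assms m c by simp
    next
      case False
      have P: "(m - (2*a - 1)) div 2 = a" using m c False by presburger
      have "16 * K \<le> 16 * (a * a)" using assms m c by (simp add: power2_eq_square algebra_simps)
      then show ?thesis unfolding u P by simp
    qed
  next
    assume c: "c = 1"
    have u: "(m + 2) div 4 = a" using m c by presburger
    show ?thesis
    proof (cases "a = 0")
      case True then show ?thesis using assms m c by simp
    next
      case False
      have P: "(m - (2*a - 1)) div 2 = a + 1" using m c False by presburger
      have "16 * K \<le> 16 * (a * a) + 8 * a + 1" using assms m c by (simp add: power2_eq_square algebra_simps)
      then have "K \<le> a * (a + 1)" by (simp add: algebra_simps)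
      then show ?thesis unfolding u P .
    qed
  next
    assume c: "c = 2"
    have u: "(m + 2) div 4 = a + 1" using m c by presburger
    have P: "(m - (2*(a+1) - 1)) div 2 = a" using m c by presburger
    have "16 * K \<le> 16 * (a * a) + 16 * a + 4" using assms m c by (simp add: power2_eq_square algebra_simps)
    then have "K \<le> (a + 1) * a" by (simp add: algebra_simps)
    then show ?thesis unfolding u P .
  next
    assume c: "c = 3"
    have u: "(m + 2) div 4 = a + 1" using m c by presburger
    have P: "(m - (2*(a+1) - 1)) div 2 = a + 1" using m c by presburger
    have "16 * K \<le> 16 * (a * a) + 24 * a + 9" using assms m c by (simp add: power2_eq_square algebra_simps)
    then have "K \<le> (a + 1) * (a + 1)" by (simp add: algebra_simps)
    then show ?thesis unfolding u P .
  qed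
qed

lemma sparse_widths:
  fixes N m :: nat
  assumes "108 * N + 72 \<le> m^2"
  shows "N \<le> ((m - 4 * (m div 8) + 1) div 2) * (m div 8)"
proof -
  define a where "a = m div 8"
  have m8: "m \<le> 8 * a + 7" "8 * a \<le> m" unfolding a_def by auto
  have "(m - 4 * a + 1) div 2 \<ge> 2 * a" using m8 by presburger
  then have "2 * (a * a) \<le> ((m - 4 * a + 1) div 2) * a" by (simp add: mult.assoc[symmetric] mult_right_mono)
  moreover have "m^2 \<le> (8 * a + 7)^2" using m8 by (intro power_mono) auto
  then have "108 * N + 72 \<le> 64 * (a * a) + 112 * a + 49" using assms by (simp add: power2_eq_square algebra_simps)
  moreover have "a \<le> a * a" by (cases a) auto
  ultimately show ?thesis unfolding a_def by linarith
qed

text \<open>With \<open>2u - 1\<close> first-layer neurons and the rest in the second layer, \<open>u\<close> blocks of \<open>P\<close> consecutive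
  samples each cover all \<open>K\<close> samples.\<close>
lemma ft_feasible_memorization:
  assumes K: "1 \<le> K" and Km: "16 * K \<le> m^2"
  shows "ft_feasible m K K TYPE('n::finite)"
proof -
  define u where "u = (m + 2) div 4"
  define P where "P = (m - (2 * u - 1)) div 2"
  have "4 \<le> m"
  proof (rule ccontr)
    assume "\<not> 4 \<le> m"
    then have "m^2 \<le> 3^2" by (intro power_mono) auto
    then show False using Km K by simp
  qed
  then have u: "1 \<le> u" "2 * u - 1 \<le> m" by (auto simp: u_def)
  have KP: "K \<le> u * P" using memorization_widths[OF Km] by (simp add: u_def P_def)
  then have "1 \<le> P" using K by (cases P) auto
  show ?thesis
  proof (rule ft_feasible_if_block_sparse[where L = u and P = P])
    show "1 \<le> K" "2 * u - 1 + (m - (2 * u - 1)) = m" "2 * u - 1 \<le> 2 * u - 1" "2 * P \<le> m - (2 * u - 1)"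
      using K u by (simp_all add: P_def)
    show "\<exists>f. block_partition u f \<and> (\<forall>y. (\<forall>s. s \<notin> S \<longrightarrow> y s = 0) \<longrightarrow> block_sparse K u f P y)"
      for S
      using block_partition_equal_blocks[OF u(1) \<open>1 \<le> P\<close>] block_sparse_equal_blocks[OF KP u(1) \<open>1 \<le> P\<close>]
      by blast
  qed
qed

text \<open>With \<open>4v\<close> second-layer neurons, \<open>v = \<lfloor>m/8\<rfloor>\<close>, each block may contain \<open>v\<close> nonzero targets,
  hence at most \<open>2v\<close> nonzero jumps.\<close>
lemma ft_feasible_sparse:
  assumes N: "1 \<le> N" "N \<le> K" and Nm: "108 * N + 72 \<le> m^2"
  shows "ft_feasible m K N TYPE('n::finite)"
proof -
  define v where "v = m div 8"
  define L where "L = (m - 4 * v + 1) div 2"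
  have "8 \<le> m"
  proof (rule ccontr)
    assume "\<not> 8 \<le> m"
    then have "m^2 \<le> 7^2" by (intro power_mono) auto
    then show False using Nm N by simp
  qed
  then have v: "1 \<le> v" "4 * v \<le> m" and L: "1 \<le> L" by (auto simp: v_def L_def)
  have NL: "N \<le> L * v" using sparse_widths[OF Nm] by (simp add: L_def v_def)
  show ?thesis
  proof (rule ft_feasible_if_block_sparse[where L = L and P = "2 * v"])
    show "1 \<le> K" "m - 4 * v + 4 * v = m" "2 * L - 1 \<le> m - 4 * v" "2 * (2 * v) \<le> 4 * v"
      using N v by (auto simp: L_def)
  next
    fix S assume S: "S \<subseteq> {..<K}" "card S = N"
    then obtain f where blocks: "block_partition L f"
      and count: "\<And>b. b < L \<Longrightarrow> card {r \<in> S. block_of L f r = b} \<le> v"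
      using exists_blocks_bounded_count[OF S(1) _ v(1) L] NL by metis
    have "finite S" using S(1) finite_subset by blast
    have "block_sparse K L f (2 * v) y" if "\<forall>s. s \<notin> S \<longrightarrow> y s = 0" for y
      unfolding block_sparse_def
      using card_block_jumps_le[OF blocks \<open>finite S\<close>, of y] that count by (fastforce intro: order.trans)
    with blocks show "\<exists>f. block_partition L f \<and> (\<forall>y. (\<forall>s. s \<notin> S \<longrightarrow> y s = 0) \<longrightarrow> block_sparse K L f (2 * v) y)"
      by blast
  qed
qed

section \<open>Capacity bounds\<close>

lemma ft_feasible_zero: "ft_feasible m K 0 TYPE('n::finite)"
  unfolding ft_feasible_def
proof (intro allI impI)
  fix T :: "nat set" and x :: "nat \<Rightarrow> real^'n" and z :: "nat \<Rightarrow> real"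
  assume "T \<subseteq> {1..K}" "card T = 0"
  then have T: "T = {}" using finite_subset[of T "{1..K}"] by auto
  show "\<exists>d1 d2 W1 b1 W2 b2 W3 b3. d1 + d2 = m \<and>
            (\<forall>i\<in>T. net3 d1 d2 W1 b1 W2 b2 W3 b3 (x i) = z i) \<and>
            (\<forall>i\<in>{1..K} - T. net3 d1 d2 W1 b1 W2 b2 W3 b3 (x i) = 0)"
    apply (rule exI[of _ m], rule exI[of _ 0], rule exI[of _ "\<lambda>_. 0"], rule exI[of _ "\<lambda>_. 0"],
           rule exI[of _ "\<lambda>_ _. 0"], rule exI[of _ "\<lambda>_. 0"], rule exI[of _ "\<lambda>_. 0"], rule exI[of _ 0])
    using T by (simp add: net3_def)
qed

lemma
  shows ft_capacity_le: "ft_capacity m K TYPE('n::finite) \<le> K"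
    and ft_feasible_ft_capacity: "ft_feasible m K (ft_capacity m K TYPE('n)) TYPE('n)"
proof -
  have "ft_capacity m K TYPE('n) \<le> K \<and> ft_feasible m K (ft_capacity m K TYPE('n)) TYPE('n)"
    unfolding ft_capacity_def
    by (rule GreatestI_nat[where P = "\<lambda>N. N \<le> K \<and> ft_feasible m K N TYPE('n)" and k = 0 and b = K])
      (simp_all add: ft_feasible_zero)
  then show "ft_capacity m K TYPE('n) \<le> K" "ft_feasible m K (ft_capacity m K TYPE('n)) TYPE('n)"
    by auto
qed

lemma ft_capacity_greatest: "N \<le> K \<Longrightarrow> ft_feasible m K N TYPE('n::finite) \<Longrightarrow> N \<le> ft_capacity m K TYPE('n)"
  unfolding ft_capacity_def by (rule Greatest_le_nat[where b = K]) auto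

lemma ft_capacity_memorization:
  "1 \<le> K \<Longrightarrow> 16 * K \<le> m^2 \<Longrightarrow> ft_capacity m K TYPE('n::finite) = K"
  using ft_capacity_greatest[OF order.refl ft_feasible_memorization] ft_capacity_le by (metis antisym)

lemma ft_capacity_lower_bound:
  assumes "(real m)^2 / 108 - 2/3 \<le> real K"
  shows "\<lfloor>(real m)^2 / 108 - 2/3\<rfloor> \<le> int (ft_capacity m K TYPE('n::finite))"
proof (cases "\<lfloor>(real m)^2 / 108 - 2/3\<rfloor> \<le> 0")
  case False
  define N where "N = nat \<lfloor>(real m)^2 / 108 - 2/3\<rfloor>"
  have "1 \<le> \<lfloor>(real m)^2 / 108 - 2/3\<rfloor>" using False by linarith
  then have "int N = \<lfloor>(real m)^2 / 108 - 2/3\<rfloor>" by (simp add: N_def)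
  moreover from this \<open>1 \<le> \<lfloor>(real m)^2 / 108 - 2/3\<rfloor>\<close> have "1 \<le> N" by linarith
  ultimately have N: "int N = \<lfloor>(real m)^2 / 108 - 2/3\<rfloor>" "1 \<le> N" by simp_all
  have "real N \<le> (real m)^2 / 108 - 2/3"
    using of_int_floor_le[of "(real m)^2 / 108 - 2/3"] N(1) by (metis of_int_of_nat_eq)
  then have "real (108 * N + 72) \<le> real (m^2)" "real N \<le> real K" using assms by simp_all
  then have "108 * N + 72 \<le> m^2" "N \<le> K" by (simp_all only: of_nat_le_iff)
  then have "N \<le> ft_capacity m K TYPE('n)"
    using ft_capacity_greatest ft_feasible_sparse[OF N(2)] by blast
  then show ?thesis using N(1) by simp
qed linarith

text \<open>In the necessary condition \<open>d1 + d2 (d1 + 1) + 2 = m + d1 d2 + 2 \<le> m + m^2/4 + 2\<close>, which is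
  below both \<open>K\<close> and \<open>3N + 2\<close> once \<open>m \<ge> 3\<close>; for \<open>m = 2\<close> the extra condition \<open>K = 3\<close> fails.\<close>
lemma ft_capacity_upper_bound:
  assumes K: "3 \<le> K" and Km: "((real m)^2 + real m + 4) / 2 \<le> real K"
  shows "real (ft_capacity m K TYPE('n::finite)) \<le> ((real m)^2 + real m) / 6"
proof (rule ccontr)
  define N where "N = ft_capacity m K TYPE('n)"
  assume "\<not> ?thesis"
  then have N: "((real m)^2 + real m) / 6 < real N" by (simp add: N_def)
  moreover have "0 \<le> ((real m)^2 + real m) / 6" by simp
  ultimately have "1 \<le> N" by linarith
  have feas: "ft_feasible m K N TYPE('n)" unfolding N_def by (rule ft_feasible_ft_capacity)
  have "N \<le> K" unfolding N_def by (rule ft_capacity_le)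
  from ft_feasible_necessary[OF feas K \<open>1 \<le> N\<close> this]
  obtain d1 d2 where d: "d1 + d2 = m" "0 < d1" "0 < d2" "(d1, d2) = (1, 1) \<longrightarrow> K = 3"
    and bound: "min K (3 * N + 2) \<le> d1 + d2 * (d1 + 1) + 2"
    by blast
  have m: "real m = real d1 + real d2" using d(1) by simp
  have "(real m)^2 - 4 * (real d1 * real d2) = (real d1 - real d2)^2"
    unfolding m by (simp add: power2_eq_square algebra_simps)
  then have amgm: "4 * (real d1 * real d2) \<le> (real m)^2" by (metis diff_ge_0_iff_ge zero_le_power2)
  have lhs: "real (d1 + d2 * (d1 + 1) + 2) = real m + real d1 * real d2 + 2"
    unfolding m by (simp add: algebra_simps)
  show False
  proof (cases "m = 2")
    case True
    then have "(d1, d2) = (1, 1)" using d by auto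
    then show False using d(4) Km True by simp
  next
    case False
    then have "3 \<le> m" using d by linarith
    then have "3 * real m \<le> (real m)^2" by (simp add: power2_eq_square)
    then have "real (d1 + d2 * (d1 + 1) + 2) < real K" "real (d1 + d2 * (d1 + 1) + 2) < real (3 * N + 2)"
      using amgm Km N \<open>3 \<le> m\<close> unfolding lhs by (simp_all add: field_simps)
    then show False using bound by linarith
  qed
qed

theorem corollary5p3:
  fixes K m :: nat
  assumes "K \<ge> 3"
  shows "(int K \<le> \<lfloor>(real m)^2 / 16\<rfloor> \<longrightarrow> ft_capacity m K TYPE('n::finite) = K)
       \<and> (\<lfloor>(real m)^2 / 16\<rfloor> + 1 \<le> int K \<and> real K < ((real m)^2 + real m + 4) / 2 \<longrightarrow>
            \<lfloor>(real m)^2 / 108 - 2/3\<rfloor> \<le> int (ft_capacity m K TYPE('n)) \<and> ft_capacity m K TYPE('n) \<le> K)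
       \<and> (real K \<ge> ((real m)^2 + real m + 4) / 2 \<longrightarrow>
            \<lfloor>(real m)^2 / 108 - 2/3\<rfloor> \<le> int (ft_capacity m K TYPE('n)) \<and>
            real (ft_capacity m K TYPE('n)) \<le> ((real m)^2 + real m) / 6)"
proof (intro conjI impI)
  assume "int K \<le> \<lfloor>(real m)^2 / 16\<rfloor>"
  then have "real K \<le> (real m)^2 / 16" by (simp add: le_floor_iff)
  then have "real (16 * K) \<le> real (m^2)" by simp
  then have "16 * K \<le> m^2" by (simp only: of_nat_le_iff)
  with assms show "ft_capacity m K TYPE('n) = K" by (intro ft_capacity_memorization) simp_all
next
  assume "\<lfloor>(real m)^2 / 16\<rfloor> + 1 \<le> int K \<and> real K < ((real m)^2 + real m + 4) / 2"
  then have "\<lfloor>(real m)^2 / 16\<rfloor> < int K" by linarith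
  then have "(real m)^2 / 16 < real K" by (simp add: floor_less_iff)
  then show "\<lfloor>(real m)^2 / 108 - 2/3\<rfloor> \<le> int (ft_capacity m K TYPE('n))"
    using zero_le_power2[of "real m"] by (intro ft_capacity_lower_bound) linarith
next
  show "ft_capacity m K TYPE('n) \<le> K" by (rule ft_capacity_le)
next
  assume "((real m)^2 + real m + 4) / 2 \<le> real K"
  then show "\<lfloor>(real m)^2 / 108 - 2/3\<rfloor> \<le> int (ft_capacity m K TYPE('n))"
    using zero_le_power2[of "real m"] by (intro ft_capacity_lower_bound) simp
next
  assume "((real m)^2 + real m + 4) / 2 \<le> real K"
  with assms show "real (ft_capacity m K TYPE('n)) \<le> ((real m)^2 + real m) / 6"
    by (rule ft_capacity_upper_bound)
qed

end
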